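(* Let $V$ be a Gotzmann set of monomials of degree $d$ in $R=K[x_1,\dots,x_n]$. Then for every $i=1,2,\dots,n$, $$\overline{|V|}^{(n-1)}\leq |\mathrm{D}_i(V)| \leq |V|_{\langle\!\langle n-1\rangle\!\rangle}.$$
   Context: Let $K$ be a field and $R=K[x_1,\dots,x_n]$ with $\deg x_i=1$. Let $M=\{x_1,\dots,x_n\}$, $M^d$ the set of monomials of degree $d$ ($M^0=\{1\}$), and for a set $V$ of monomials of degree $d$ let $MV=\{x_iv : v\in V,\ 1\le i\le n\}$. Binomial representations: for positive integers $k,h$, write uniquely $h=\binom{h(k)+k}{k}+\binom{h(k-1)+k-1}{k-1}+\dots+\binom{h(j)+j}{j}$ with $h(k)\ge h(k-1)\ge\dots\ge h(j)\ge 0$, $j\ge1$ (the $k$th binomial representation). Define $h^{\langle k\rangle}=\sum_{m=j}^{k}\binom{h(m)+m+1}{m}$ and $h_{\langle\!\langle k\rangle\!\rangle}=\sum_{m=j}^{k}\binom{h(m)+m-1}{m-1}$, with $0^{\langle k\rangle}=0_{\langle\!\langle k\rangle\!\rangle}=0$ and $1^{\langle 0\rangle}=1_{\langle\!\langle 0\rangle\!\rangle}=1$. By Macaulay, $|MV|\ge |V|^{\langle n-1\rangle}$ for any set $V$ of monomials of the same degree; $V$ is called a Gotzmann set if $|MV|=|V|^{\langle n-1\rangle}$. For a positive integer $h$, let $\alpha=\max\{0,\max\{\alpha\in\mathbb{Z} : h-\binom{\alpha+k}{k}>0\}\}$ and set $\overline{h}^{(k)}=h-\binom{\alpha+k}{k}$;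 thus $\overline{h}^{(k)}=0$ if $h=1$, $\overline{h}^{(k)}=\binom{h(k)+k-1}{k-1}$ if $h>1$ and $j=k$, and $\overline{h}^{(k)}=\sum_{m=j}^{k-1}\binom{h(m)+m}{m}$ if $h>1$ and $j<k$. (For $h=0$ it is taken to be $0$.) For a set $V$ of monomials of degree $d$ with $u=\gcd(V)$: if $|V|>1$, let $\mathrm{K}_i(V)=\{v\in M^d : x_iu \text{ divides } v\}$ and $\mathrm{D}_i(V)=V\setminus \mathrm{K}_i(V)$; if $|V|=1$, let $\mathrm{K}_i(V)=V$ and $\mathrm{D}_i(V)=\emptyset$. *)

theory Defs
  imports Main
begin

text \<open>Monomials in x_1..x_n are exponent vectors a :: nat => nat with support in {1..n}.\<close>

definition monomials :: "nat \<Rightarrow> nat \<Rightarrow> (nat \<Rightarrow> nat) set" where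
  "monomials n d = {a. (\<forall>k. a k \<noteq> 0 \<longrightarrow> k \<in> {1..n}) \<and> (\<Sum>k\<in>{1..n}. a k) = d}"

definition xmul :: "nat \<Rightarrow> (nat \<Rightarrow> nat) \<Rightarrow> (nat \<Rightarrow> nat)" where
  "xmul i a = a(i := Suc (a i))"

definition MV :: "nat \<Rightarrow> (nat \<Rightarrow> nat) set \<Rightarrow> (nat \<Rightarrow> nat) set" where
  "MV n V = {xmul i v | i v. i \<in> {1..n} \<and> v \<in> V}"

definition mdvd :: "(nat \<Rightarrow> nat) \<Rightarrow> (nat \<Rightarrow> nat) \<Rightarrow> bool" where
  "mdvd u v \<longleftrightarrow> (\<forall>k. u k \<le> v k)"

definition mgcd :: "(nat \<Rightarrow> nat) set \<Rightarrow> (nat \<Rightarrow> nat)" where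
  "mgcd V = (\<lambda>k. Min ((\<lambda>v. v k) ` V))"

definition binrep :: "nat \<Rightarrow> nat \<Rightarrow> nat \<Rightarrow> (nat \<Rightarrow> nat) \<Rightarrow> bool" where
  "binrep k h j f \<longleftrightarrow> 1 \<le> j \<and> j \<le> k \<and> (\<forall>m. j \<le> m \<and> m < k \<longrightarrow> f m \<le> f (Suc m))
     \<and> h = (\<Sum>m=j..k. (f m + m) choose m)"

definition mac_up :: "nat \<Rightarrow> nat \<Rightarrow> nat" where
  "mac_up k h = (if h = 0 then 0
     else if k = 0 then (if h = 1 then 1 else undefined)
     else (let (j, f) = (SOME (j, f). binrep k h j f) in
           \<Sum>m=j..k. (f m + m + 1) choose m))"

definition mac_low :: "nat \<Rightarrow> nat \<Rightarrow> nat" where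
  "mac_low k h = (if h = 0 then 0
     else if k = 0 then (if h = 1 then 1 else undefined)
     else (let (j, f) = (SOME (j, f). binrep k h j f) in
           \<Sum>m=j..k. (f m + m - 1) choose (m - 1)))"

definition bar_alpha :: "nat \<Rightarrow> nat \<Rightarrow> nat" where
  "bar_alpha k h = (if h \<le> 1 then 0 else Max {a. ((a + k) choose k) < h})"

definition hbar :: "nat \<Rightarrow> nat \<Rightarrow> nat" where
  "hbar k h = (if h = 0 then 0 else h - ((bar_alpha k h + k) choose k))"

definition gotzmann :: "nat \<Rightarrow> (nat \<Rightarrow> nat) set \<Rightarrow> bool" where
  "gotzmann n V \<longleftrightarrow> card (MV n V) = mac_up (n - 1) (card V)"

definition Kset :: "nat \<Rightarrow> nat \<Rightarrow> nat \<Rightarrow> (nat \<Rightarrow> nat) set \<Rightarrow> (nat \<Rightarrow> nat) set" where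
  "Kset n d i V = (if card V > 1 then {v \<in> monomials n d. mdvd (xmul i (mgcd V)) v} else V)"

definition Dset :: "nat \<Rightarrow> nat \<Rightarrow> nat \<Rightarrow> (nat \<Rightarrow> nat) set \<Rightarrow> (nat \<Rightarrow> nat) set" where
  "Dset n d i V = (if card V > 1 then V - Kset n d i V else {})"

end

theory Submission
  imports Defs
begin

text \<open>Let \<open>u = gcd V\<close>, let \<open>D = D\<^sub>i(V)\<close> be the monomials of \<open>V\<close> with \<open>x\<^sub>i\<close>-exponent \<open>u\<^sub>i\<close>
  and \<open>W = V - D\<close>. Inside \<open>MV\<close>, the set \<open>{x\<^sub>j v | j \<noteq> i, v \<in> D}\<close> is disjoint both from \<open>x\<^sub>i V\<close>
  and from \<open>MW\<close>, since their \<open>x\<^sub>i\<close>-exponents exceed \<open>u\<^sub>i\<close>. After cancelling \<open>x\<^sub>i\<^bsup>u\<^sub>i\<^esup>\<close>, \<open>D\<close> lives in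
  \<open>n - 1\<close> variables, so by Macaulay's theorem that set has at least \<open>|D|\<^bsup>\<langle>n-2\<rangle>\<^esup>\<close> elements.
  As \<open>V\<close> is Gotzmann this gives
  \<open>|V| + |D|\<^bsup>\<langle>n-2\<rangle>\<^esup> \<le> |V|\<^bsup>\<langle>n-1\<rangle>\<^esup>\<close> and \<open>(|V| - |D|)\<^bsup>\<langle>n-1\<rangle>\<^esup> + |D|\<^bsup>\<langle>n-2\<rangle>\<^esup> \<le> |V|\<^bsup>\<langle>n-1\<rangle>\<^esup>\<close>.
  The first inequality is equivalent to the upper bound by the identity
  \<open>h\<^bsup>\<langle>k+1\<rangle>\<^esup> = h + (h\<^bsub>\<langle>\<langle>k+1\<rangle>\<rangle>\<^esub>)\<^bsup>\<langle>k\<rangle>\<^esup>\<close>; the second forces the lower bound because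
  \<open>h \<mapsto> h\<^bsup>\<langle>k\<rangle>\<^esup>\<close> is strictly subadditive for \<open>k \<ge> 1\<close>.

  Macaulay's theorem itself is proved by compression and a double induction on the number of
  variables and the degree.\<close>

section \<open>Macaulay representations\<close>

declare binomial_Suc_Suc [simp del]

lemma choose_add_Suc_Suc:
  "((Suc a + Suc k) choose (Suc k)) = ((a + Suc k) choose k) + ((a + Suc k) choose (Suc k))"
  by (simp add: binomial_Suc_Suc)

lemma Suc_le_choose_add: "Suc a \<le> ((a + Suc k) choose (Suc k))"
proof (induction k)
  case (Suc k)
  then show ?case
    using choose_add_Suc_Suc[of a "Suc k"] by (simp add: binomial_Suc_Suc)
qed simp

lemma choose_add_le_Suc: "((a + k) choose k) \<le> ((a + Suc k) choose (Suc k))"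
  by (simp add: binomial_Suc_Suc)

lemma choose_add_swap: "((a + b) choose b) = ((a + b) choose a)"
  using binomial_symmetric[of b "a + b"] by simp

lemma choose_add_mono: "a \<le> b \<Longrightarrow> ((a + k) choose k) \<le> ((b + k) choose k)"
  by (rule binomial_right_mono) simp

lemma choose_add_strict_mono:
  assumes "0 < k" "a < b"
  shows "((a + k) choose k) < ((b + k) choose k)"
proof -
  obtain k' where k: "k = Suc k'" using assms(1) by (cases k) auto
  have "((a + k) choose k) < ((Suc a + k) choose k)"
    using choose_add_Suc_Suc[of a k'] k by simp
  also have "\<dots> \<le> ((b + k) choose k)"
    using assms(2) by (intro choose_add_mono) simp
  finally show ?thesis .
qed

definition binom_floor :: "nat \<Rightarrow> nat \<Rightarrow> nat" where
  "binom_floor k h = (GREATEST a. ((a + k) choose k) \<le> h)"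

lemma binom_floor_eq:
  assumes "((a + Suc k) choose (Suc k)) \<le> h" "h < ((Suc a + Suc k) choose (Suc k))"
  shows "binom_floor (Suc k) h = a"
  unfolding binom_floor_def
proof (rule Greatest_equality)
  fix b assume "((b + Suc k) choose (Suc k)) \<le> h"
  then show "b \<le> a"
    using assms(2) choose_add_mono[of "Suc a" b "Suc k"] by (meson leD not_less_eq_eq order_trans)
qed (fact assms(1))

lemma binom_decomp:
  assumes "h \<noteq> 0"
  obtains a s where "h = ((a + Suc k) choose (Suc k)) + s" "s < ((a + Suc k) choose k)"
proof -
  let ?P = "\<lambda>a. ((a + Suc k) choose (Suc k)) \<le> h"
  let ?a = "binom_floor (Suc k) h"
  have P0: "?P 0" using assms by simp
  have bound: "b \<le> h" if "?P b" for b
    using that Suc_le_choose_add[of b k] by linarith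
  have "?P ?a"
    unfolding binom_floor_def by (rule GreatestI_nat[where P = ?P, OF P0 bound])
  moreover have "\<not> ?P (Suc ?a)"
  proof
    assume "?P (Suc ?a)"
    then have "Suc ?a \<le> ?a"
      unfolding binom_floor_def by (rule Greatest_le_nat[where P = ?P, OF _ bound])
    then show False by simp
  qed
  ultimately show thesis
    using choose_add_Suc_Suc[of ?a k] by (intro that[of ?a "h - ((?a + Suc k) choose (Suc k))"]) linarith+
qed

text \<open>\<open>h\<^bsup>\<langle>k\<rangle>\<^esup>\<close> and \<open>h\<^bsub>\<langle>\<langle>k\<rangle>\<rangle>\<^esub>\<close> computed greedily: peel off the largest leading term
  \<open>(a + k) choose k \<le> h\<close> and recurse on the remainder with \<open>k - 1\<close>.\<close>

fun mac_up_rec :: "nat \<Rightarrow> nat \<Rightarrow> nat" where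
  "mac_up_rec 0 h = h"
| "mac_up_rec (Suc k) h = (if h = 0 then 0 else
     let a = binom_floor (Suc k) h in
     ((Suc a + Suc k) choose (Suc k)) + mac_up_rec k (h - ((a + Suc k) choose (Suc k))))"

fun mac_low_rec :: "nat \<Rightarrow> nat \<Rightarrow> nat" where
  "mac_low_rec 0 h = 0"
| "mac_low_rec (Suc k) h = (if h = 0 then 0 else
     let a = binom_floor (Suc k) h in
     ((a + k) choose k) + mac_low_rec k (h - ((a + Suc k) choose (Suc k))))"

declare mac_up_rec.simps(2) [simp del] mac_low_rec.simps(2) [simp del]

lemma mac_up_rec_0 [simp]: "mac_up_rec k 0 = 0"
  by (cases k) (simp_all add: mac_up_rec.simps)

lemma mac_low_rec_0 [simp]: "mac_low_rec k 0 = 0"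
  by (cases k) (simp_all add: mac_low_rec.simps)

lemma
  assumes "s < ((a + Suc k) choose k)"
  shows mac_up_rec_block:
      "mac_up_rec (Suc k) (((a + Suc k) choose (Suc k)) + s) = ((Suc a + Suc k) choose (Suc k)) + mac_up_rec k s"
    and mac_low_rec_block:
      "mac_low_rec (Suc k) (((a + Suc k) choose (Suc k)) + s) = ((a + k) choose k) + mac_low_rec k s"
proof -
  have "binom_floor (Suc k) (((a + Suc k) choose (Suc k)) + s) = a"
    by (rule binom_floor_eq) (use assms choose_add_Suc_Suc[of a k] in auto)
  moreover have "((a + Suc k) choose (Suc k)) + s \<noteq> 0"
    using Suc_le_choose_add[of a k] by simp
  ultimately show "mac_up_rec (Suc k) (((a + Suc k) choose (Suc k)) + s) = ((Suc a + Suc k) choose (Suc k)) + mac_up_rec k s"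
    and "mac_low_rec (Suc k) (((a + Suc k) choose (Suc k)) + s) = ((a + k) choose k) + mac_low_rec k s"
    by (simp_all add: mac_up_rec.simps mac_low_rec.simps Let_def)
qed

lemma mac_up_rec_binom: "mac_up_rec k ((a + k) choose k) = ((Suc a + k) choose k)"
  by (cases k) (use mac_up_rec_block[of 0 a] in auto)

lemma mac_low_rec_binom: "mac_low_rec (Suc k) ((a + Suc k) choose (Suc k)) = ((a + k) choose k)"
  using mac_low_rec_block[of 0 a k] by simp

lemma mac_up_rec_split:
  assumes "s \<le> ((a + Suc k) choose k)"
  shows "mac_up_rec (Suc k) (((a + Suc k) choose (Suc k)) + s) = ((Suc a + Suc k) choose (Suc k)) + mac_up_rec k s"
proof (cases "s < ((a + Suc k) choose k)")
  case False
  then have s: "s = ((Suc a + k) choose k)" using assms by simp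
  have "mac_up_rec (Suc k) (((a + Suc k) choose (Suc k)) + s) = mac_up_rec (Suc k) ((Suc a + Suc k) choose (Suc k))"
    using s choose_add_Suc_Suc[of a k] by (simp add: add.commute)
  also have "\<dots> = ((Suc a + Suc k) choose (Suc k)) + mac_up_rec k s"
    using s mac_up_rec_binom[of "Suc k" "Suc a"] mac_up_rec_binom[of k "Suc a"] choose_add_Suc_Suc[of "Suc a" k]
    by simp
  finally show ?thesis .
qed (rule mac_up_rec_block)

lemma mac_low_rec_split:
  assumes "s \<le> ((a + Suc k) choose k)"
  shows "mac_low_rec (Suc k) (((a + Suc k) choose (Suc k)) + s) = ((a + k) choose k) + mac_low_rec k s"
proof (cases "s < ((a + Suc k) choose k)")
  case False
  then have s: "s = ((a + Suc k) choose k)" using assms by simp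
  have "mac_low_rec (Suc k) (((a + Suc k) choose (Suc k)) + s) = mac_low_rec (Suc k) ((Suc a + Suc k) choose (Suc k))"
    using s choose_add_Suc_Suc[of a k] by (simp add: add.commute)
  also have "\<dots> = ((Suc a + k) choose k)"
    by (rule mac_low_rec_binom)
  also have "\<dots> = ((a + k) choose k) + mac_low_rec k s"
  proof (cases k)
    case (Suc k')
    have "mac_low_rec k s = ((Suc a + k') choose k')"
      using s Suc mac_low_rec_binom[where a = "Suc a" and k = k'] by simp
    then show ?thesis
      using Suc choose_add_Suc_Suc[of a k'] by simp
  qed (simp add: s)
  finally show ?thesis .
qed (rule mac_low_rec_block)

lemma mac_up_rec_less_Suc: "mac_up_rec k h < mac_up_rec k (Suc h)"
proof (induction k arbitrary: h)
  case (Suc k)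
  show ?case
  proof (cases "h = 0")
    case True
    then show ?thesis using mac_up_rec_binom[of "Suc k" 0] by simp
  next
    case False
    then obtain a s where "h = ((a + Suc k) choose (Suc k)) + s" "s < ((a + Suc k) choose k)"
      by (rule binom_decomp)
    then show ?thesis
      using mac_up_rec_split[of s a k] mac_up_rec_split[of "Suc s" a k] Suc.IH[of s] by simp
  qed
qed simp

lemma strict_mono_mac_up_rec: "strict_mono (mac_up_rec k)"
  by (simp add: strict_mono_Suc_iff mac_up_rec_less_Suc)

lemma mac_low_rec_le_Suc: "mac_low_rec k h \<le> mac_low_rec k (Suc h)"
proof (induction k arbitrary: h)
  case (Suc k)
  show ?case
  proof (cases "h = 0")
    case False
    then obtain a s where "h = ((a + Suc k) choose (Suc k)) + s" "s < ((a + Suc k) choose k)"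
      by (rule binom_decomp)
    then show ?thesis
      using mac_low_rec_split[of s a k] mac_low_rec_split[of "Suc s" a k] Suc.IH[of s] by simp
  qed simp
qed simp

lemma mono_mac_low_rec: "mono (mac_low_rec k)"
  by (simp add: mono_iff_le_Suc mac_low_rec_le_Suc)

lemma mac_low_rec_le: "mac_low_rec k h \<le> h"
proof (induction k arbitrary: h)
  case (Suc k)
  show ?case
  proof (cases "h = 0")
    case False
    then obtain a s where h: "h = ((a + Suc k) choose (Suc k)) + s" and s: "s < ((a + Suc k) choose k)"
      by (rule binom_decomp)
    then have "mac_low_rec (Suc k) h = ((a + k) choose k) + mac_low_rec k s"
      by (simp only: mac_low_rec_block)
    also have "\<dots> \<le> ((a + Suc k) choose (Suc k)) + s"
      using Suc.IH[of s] choose_add_le_Suc[of a k] by linarith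
    finally show ?thesis using h by simp
  qed simp
qed simp

lemma mac_up_rec_Suc_eq: "mac_up_rec (Suc k) h = h + mac_up_rec k (mac_low_rec (Suc k) h)"
proof (induction k arbitrary: h)
  case 0
  show ?case
  proof (cases "h = 0")
    case False
    then obtain a s where h: "h = ((a + Suc 0) choose (Suc 0)) + s" and s: "s < ((a + Suc 0) choose 0)"
      by (rule binom_decomp)
    then show ?thesis
      using mac_up_rec_block[OF s] mac_low_rec_block[OF s] by simp
  qed simp
next
  case (Suc k)
  show ?case
  proof (cases "h = 0")
    case False
    then obtain a s where h: "h = ((a + Suc (Suc k)) choose (Suc (Suc k))) + s"
      and s: "s < ((a + Suc (Suc k)) choose (Suc k))"
      by (rule binom_decomp)
    have "mac_low_rec (Suc k) s \<le> mac_low_rec (Suc k) ((Suc a + Suc k) choose (Suc k))"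
      using s by (intro monoD[OF mono_mac_low_rec]) (simp add: add.commute)
    then have "mac_low_rec (Suc k) s \<le> ((a + Suc k) choose k)"
      using mac_low_rec_binom[where a = "Suc a" and k = k] by simp
    then show ?thesis
      using h s mac_up_rec_split[of "mac_low_rec (Suc k) s" a k] mac_up_rec_block[OF s] mac_low_rec_block[OF s]
        Suc.IH[of s] choose_add_Suc_Suc[of a "Suc k"]
      by simp
  qed simp
qed

text \<open>With the next lemma: \<open>h - h\<^bsub>\<langle>\<langle>k\<rangle>\<rangle>\<^esub>\<close> is the largest \<open>w\<close> with \<open>w\<^bsup>\<langle>k\<rangle>\<^esup> \<le> h\<close>.\<close>

lemma less_mac_up_rec_Suc_diff: "h < mac_up_rec k (Suc (h - mac_low_rec k h))"
proof (induction k arbitrary: h)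
  case (Suc k)
  show ?case
  proof (cases "h = 0")
    case True
    then show ?thesis using mac_up_rec_less_Suc[of "Suc k" 0] by simp
  next
    case False
    then obtain a s where h: "h = ((a + Suc k) choose (Suc k)) + s" and s: "s < ((a + Suc k) choose k)"
      by (rule binom_decomp)
    let ?g = "Suc (h - mac_low_rec (Suc k) h)"
    have low: "mac_low_rec (Suc k) h = ((a + k) choose k) + mac_low_rec k s"
      using h mac_low_rec_block[OF s] by simp
    show ?thesis
    proof (cases "((a + Suc k) choose (Suc k)) \<le> ?g")
      case True
      have "h < ((Suc a + Suc k) choose (Suc k))"
        using h s choose_add_Suc_Suc[of a k] by linarith
      also have "\<dots> = mac_up_rec (Suc k) ((a + Suc k) choose (Suc k))"
        using mac_up_rec_binom[of "Suc k" a] by simp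
      also have "\<dots> \<le> mac_up_rec (Suc k) ?g"
        using True by (simp add: strict_mono_less_eq[OF strict_mono_mac_up_rec])
      finally show ?thesis .
    next
      case False
      then obtain a' where a: "a = Suc a'" by (cases a) auto
      have pascal: "((a + Suc k) choose (Suc k)) = ((a' + Suc k) choose k) + ((a' + Suc k) choose (Suc k))"
        using a choose_add_Suc_Suc[of a' k] by simp
      have g: "?g = ((a' + Suc k) choose (Suc k)) + Suc (s - mac_low_rec k s)"
        using h low pascal mac_low_rec_le[of k s] a by simp
      then have "Suc (s - mac_low_rec k s) \<le> ((a' + Suc k) choose k)"
        using False pascal by linarith
      then have "mac_up_rec (Suc k) ?g = ((a + Suc k) choose (Suc k)) + mac_up_rec k (Suc (s - mac_low_rec k s))"
        unfolding g a by (rule mac_up_rec_split)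
      then show ?thesis
        using Suc.IH[of s] h by simp
    qed
  qed
qed simp

lemma add_mac_low_rec_le:
  assumes "mac_up_rec k w \<le> h"
  shows "w + mac_low_rec k h \<le> h"
proof -
  have "\<not> Suc (h - mac_low_rec k h) \<le> w"
    using assms less_mac_up_rec_Suc_diff[of h k] strict_mono_less_eq[OF strict_mono_mac_up_rec]
    by (meson le_trans not_le)
  then show ?thesis
    using mac_low_rec_le[of k h] by linarith
qed

lemma mac_up_rec_le_add_diff:
  assumes "mac_up_rec (Suc k) w \<le> h"
  shows "mac_up_rec (Suc k) h \<le> h + mac_up_rec k (h - w)"
proof -
  have "mac_low_rec (Suc k) h \<le> h - w"
    using add_mac_low_rec_le[OF assms] by linarith
  then show ?thesis
    using mac_up_rec_Suc_eq[of k h] strict_mono_less_eq[OF strict_mono_mac_up_rec] by simp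
qed

lemma add_mac_up_rec_le_iff: "h + mac_up_rec k c \<le> mac_up_rec (Suc k) h \<longleftrightarrow> c \<le> mac_low_rec (Suc k) h"
  using mac_up_rec_Suc_eq[of k h] strict_mono_less_eq[OF strict_mono_mac_up_rec] by simp

lemma binrep_mono:
  assumes "binrep k h j f" "j \<le> m" "m \<le> k"
  shows "f m \<le> f k"
  using assms(3)
proof (induction k rule: dec_induct)
  case (step n)
  then have "f n \<le> f (Suc n)"
    using assms(1,2) by (simp add: binrep_def)
  with step.IH show ?case by simp
qed simp

lemma binrep_leading_le:
  assumes "binrep k h j f"
  shows "((f k + k) choose k) \<le> h"
  using assms by (auto simp: binrep_def intro: member_le_sum)

lemma binrep_less:
  assumes "binrep k h j f" "f k \<le> F"
  shows "h < ((F + Suc k) choose k)"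
proof -
  have "h = (\<Sum>m=j..k. ((f m + m) choose m))"
    using assms(1) by (simp add: binrep_def)
  also have "\<dots> \<le> (\<Sum>m=j..k. ((F + m) choose m))"
    using binrep_mono[OF assms(1)] assms(2) by (intro sum_mono choose_add_mono) force
  also have "\<dots> \<le> (\<Sum>m=1..k. ((F + m) choose m))"
    using assms(1) by (intro sum_mono2) (auto simp: binrep_def)
  also have "\<dots> < (\<Sum>m\<le>k. ((F + m) choose m))"
    by (simp add: atMost_atLeast0 sum.atLeast_Suc_atMost)
  also have "\<dots> = ((F + Suc k) choose k)"
    using sum_choose_lower[of F k] by simp
  finally show ?thesis .
qed

lemma binrep_mac_rec:
  assumes "binrep k h j f"
  shows "(\<Sum>m=j..k. ((f m + m + 1) choose m)) = mac_up_rec k h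
    \<and> (\<Sum>m=j..k. ((f m + m - 1) choose (m - 1))) = mac_low_rec k h"
  using assms
proof (induction k arbitrary: h)
  case (Suc k)
  have j: "1 \<le> j" "j \<le> Suc k" and h: "h = (\<Sum>m=j..Suc k. ((f m + m) choose m))"
    using Suc.prems by (auto simp: binrep_def)
  show ?case
  proof (cases "j = Suc k")
    case True
    then show ?thesis
      using h mac_up_rec_binom[of "Suc k" "f (Suc k)"] mac_low_rec_binom[where a = "f (Suc k)" and k = k]
      by simp
  next
    case False
    define h' where "h' = (\<Sum>m=j..k. ((f m + m) choose m))"
    have rep': "binrep k h' j f"
      using Suc.prems False j unfolding binrep_def h'_def by auto
    have h: "h = ((f (Suc k) + Suc k) choose (Suc k)) + h'"
      using h False j unfolding h'_def by simp
    have "h' < ((f (Suc k) + Suc k) choose k)"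
      using Suc.prems False j by (intro binrep_less[OF rep']) (simp add: binrep_def)
    then show ?thesis
      using Suc.IH[OF rep'] False j h mac_up_rec_block mac_low_rec_block by simp
  qed
qed (auto simp: binrep_def)

lemma binrep_binom: "0 < k \<Longrightarrow> binrep k ((a + k) choose k) k (\<lambda>_. a)"
  by (simp add: binrep_def)

lemma binrep_extend:
  assumes "binrep k s j g" "g k \<le> a"
  shows "binrep (Suc k) (((a + Suc k) choose (Suc k)) + s) j (g(Suc k := a))"
proof -
  have j: "1 \<le> j" "j \<le> k" using assms(1) by (auto simp: binrep_def)
  have "(\<Sum>m=j..Suc k. (((g(Suc k := a)) m + m) choose m)) = ((a + Suc k) choose (Suc k)) + s"
    using assms(1) j by (simp add: sum.cl_ivl_Suc binrep_def)
  moreover have "(g(Suc k := a)) m \<le> (g(Suc k := a)) (Suc m)" if "j \<le> m" "m < Suc k" for m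
    using assms that by (cases "m = k") (auto simp: binrep_def)
  ultimately show ?thesis
    using j by (simp add: binrep_def)
qed

lemma binrep_exists: "h \<noteq> 0 \<Longrightarrow> \<exists>j f. binrep (Suc k) h j f"
proof (induction k arbitrary: h)
  case 0
  then obtain a s where "h = ((a + Suc 0) choose (Suc 0)) + s" "s < ((a + Suc 0) choose 0)"
    by (rule binom_decomp)
  then show ?case
    using binrep_binom[of "Suc 0" a] by auto
next
  case (Suc k)
  from Suc.prems obtain a s where h: "h = ((a + Suc (Suc k)) choose (Suc (Suc k))) + s"
    and s: "s < ((a + Suc (Suc k)) choose (Suc k))"
    by (rule binom_decomp)
  show ?case
  proof (cases "s = 0")
    case True
    then show ?thesis using h binrep_binom[of "Suc (Suc k)" a] by auto
  next
    case False
    then obtain j g where rep: "binrep (Suc k) s j g"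
      using Suc.IH by blast
    have "((g (Suc k) + Suc k) choose (Suc k)) < ((Suc a + Suc k) choose (Suc k))"
      using binrep_leading_le[OF rep] s by simp
    then have "g (Suc k) \<le> a"
      using choose_add_mono[of "Suc a" "g (Suc k)" "Suc k"] by (meson not_less_eq_eq leD)
    then show ?thesis
      using binrep_extend[OF rep] h by blast
  qed
qed

lemma binrep_some:
  assumes "0 < k" "h \<noteq> 0"
  obtains j f where "(SOME (j, f). binrep k h j f) = (j, f)" "binrep k h j f"
proof -
  obtain k' where "k = Suc k'" using assms(1) by (cases k) auto
  then have "\<exists>p. case p of (j, f) \<Rightarrow> binrep k h j f"
    using binrep_exists[OF assms(2), of k'] by auto
  then have "case (SOME (j, f). binrep k h j f) of (j, f) \<Rightarrow> binrep k h j f"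
    by (rule someI_ex)
  then show thesis
    using that by (auto split: prod.splits)
qed

lemma mac_up_eq_rec:
  assumes "0 < k"
  shows "mac_up k h = mac_up_rec k h"
proof (cases "h = 0")
  case False
  then obtain j f where "(SOME (j, f). binrep k h j f) = (j, f)" "binrep k h j f"
    using binrep_some[OF assms] by blast
  then show ?thesis
    using assms False binrep_mac_rec by (simp add: mac_up_def)
qed (simp add: mac_up_def)

lemma mac_low_eq_rec:
  assumes "0 < k"
  shows "mac_low k h = mac_low_rec k h"
proof (cases "h = 0")
  case False
  then obtain j f where "(SOME (j, f). binrep k h j f) = (j, f)" "binrep k h j f"
    using binrep_some[OF assms] by blast
  then show ?thesis
    using assms False binrep_mac_rec by (simp add: mac_low_def)
qed (simp add: mac_low_def)

lemma hbar_le_1: "h \<le> 1 \<Longrightarrow> hbar k h = 0"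
  by (cases h) (simp_all add: hbar_def bar_alpha_def)

lemma hbar_eq:
  assumes "0 < k" "2 \<le> h"
  obtains a where "((a + k) choose k) < h" "h \<le> ((Suc a + k) choose k)"
    "hbar k h = h - ((a + k) choose k)"
proof
  let ?A = "{a. ((a + k) choose k) < h}"
  obtain k' where k: "k = Suc k'" using assms(1) by (cases k) auto
  have "a \<le> h" if "a \<in> ?A" for a
    using that Suc_le_choose_add[of a k'] unfolding k by simp
  then have "?A \<subseteq> {..h}" by auto
  then have fin: "finite ?A" by (rule finite_subset) simp
  have a: "bar_alpha k h = Max ?A" using assms(2) by (simp add: bar_alpha_def)
  have "0 \<in> ?A" using assms by simp
  then have "?A \<noteq> {}" by blast
  then show "((bar_alpha k h + k) choose k) < h"
    using Max_in[OF fin] a by auto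
  show "h \<le> ((Suc (bar_alpha k h) + k) choose k)"
    using Max_ge[OF fin, of "Suc (bar_alpha k h)"] a by (metis Suc_n_not_le_n mem_Collect_eq not_le)
  show "hbar k h = h - ((bar_alpha k h + k) choose k)"
    using assms(2) by (simp add: hbar_def)
qed

section \<open>Monomials in a set of variables\<close>

definition monomials_on :: "nat set \<Rightarrow> nat \<Rightarrow> (nat \<Rightarrow> nat) set" where
  "monomials_on S d = {a. (\<forall>k. a k \<noteq> 0 \<longrightarrow> k \<in> S) \<and> (\<Sum>k\<in>S. a k) = d}"

definition MV_on :: "nat set \<Rightarrow> (nat \<Rightarrow> nat) set \<Rightarrow> (nat \<Rightarrow> nat) set" where
  "MV_on S V = {xmul i v | i v. i \<in> S \<and> v \<in> V}"

definition mmul :: "(nat \<Rightarrow> nat) \<Rightarrow> (nat \<Rightarrow> nat) \<Rightarrow> (nat \<Rightarrow> nat)" where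
  "mmul c v = (\<lambda>k. c k + v k)"

definition var_pow :: "nat \<Rightarrow> nat \<Rightarrow> (nat \<Rightarrow> nat)" where
  "var_pow j t = (\<lambda>k. if k = j then t else 0)"

lemma monomials_eq_monomials_on: "monomials n d = monomials_on {1..n} d"
  by (simp add: monomials_def monomials_on_def)

lemma MV_eq_MV_on: "MV n V = MV_on {1..n} V"
  by (simp add: MV_def MV_on_def)

lemma xmul_apply: "xmul i v k = (if k = i then Suc (v k) else v k)"
  by (simp add: xmul_def)

lemma xmul_eq_mmul: "xmul i v = mmul (var_pow i 1) v"
  by (simp add: xmul_apply mmul_def var_pow_def fun_eq_iff)

lemma inj_xmul: "inj (xmul i)"
proof (rule injI)
  fix u v assume eq: "xmul i u = xmul i v"
  have "u k = v k" for k
    using fun_cong[OF eq, of k] by (simp add: xmul_apply split: if_splits)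
  then show "u = v" by blast
qed

lemma inj_mmul: "inj (mmul c)"
  by (rule injI) (auto simp: mmul_def fun_eq_iff)

lemma xmul_mmul: "xmul i (mmul c v) = mmul c (xmul i v)"
  by (auto simp: xmul_def mmul_def)

lemma mmul_var_pow: "mmul (var_pow j a) (var_pow j b) = var_pow j (a + b)"
  by (auto simp: mmul_def var_pow_def)

lemma sum_mmul: "(\<Sum>k\<in>S. mmul c v k) = (\<Sum>k\<in>S. c k) + (\<Sum>k\<in>S. v k)"
  by (simp add: mmul_def sum.distrib)

lemma sum_xmul: "finite S \<Longrightarrow> i \<in> S \<Longrightarrow> (\<Sum>k\<in>S. xmul i v k) = Suc (\<Sum>k\<in>S. v k)"
  by (simp add: xmul_eq_mmul sum_mmul var_pow_def)

lemma monomials_on_support: "v \<in> monomials_on S d \<Longrightarrow> k \<notin> S \<Longrightarrow> v k = 0"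
  by (auto simp: monomials_on_def)

lemma var_pow_mem_monomials_on: "finite S \<Longrightarrow> j \<in> S \<Longrightarrow> var_pow j d \<in> monomials_on S d"
  by (auto simp: monomials_on_def var_pow_def)

lemma mmul_mem_monomials_on:
  assumes "c \<in> monomials_on S e" "v \<in> monomials_on S d"
  shows "mmul c v \<in> monomials_on S (e + d)"
  using assms by (auto simp: monomials_on_def sum_mmul) (auto simp: mmul_def)

lemma xmul_mem_monomials_on_iff:
  assumes "finite S" "i \<in> S"
  shows "xmul i v \<in> monomials_on S (Suc d) \<longleftrightarrow> v \<in> monomials_on S d"
proof -
  have "(\<forall>k. xmul i v k \<noteq> 0 \<longrightarrow> k \<in> S) \<longleftrightarrow> (\<forall>k. v k \<noteq> 0 \<longrightarrow> k \<in> S)"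
    using assms(2) by (auto simp: xmul_apply)
  then show ?thesis
    by (simp add: monomials_on_def sum_xmul[OF assms])
qed

lemma MV_on_subset_monomials_on:
  "finite S \<Longrightarrow> V \<subseteq> monomials_on S d \<Longrightarrow> MV_on S V \<subseteq> monomials_on S (Suc d)"
  by (auto simp: MV_on_def xmul_mem_monomials_on_iff)

lemma MV_on_image_mmul: "MV_on S (mmul c ` V) = mmul c ` MV_on S V"
proof (intro equalityI subsetI)
  fix w assume "w \<in> MV_on S (mmul c ` V)"
  then obtain i v where "w = xmul i (mmul c v)" "i \<in> S" "v \<in> V"
    unfolding MV_on_def by auto
  then show "w \<in> mmul c ` MV_on S V"
    unfolding MV_on_def by (auto simp: xmul_mmul)
next
  fix w assume "w \<in> mmul c ` MV_on S V"
  then obtain i v where "w = xmul i (mmul c v)" "i \<in> S" "v \<in> V"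
    unfolding MV_on_def by (auto simp: xmul_mmul)
  then show "w \<in> MV_on S (mmul c ` V)"
    unfolding MV_on_def by blast
qed

lemma MV_on_Un: "MV_on S (A \<union> B) = MV_on S A \<union> MV_on S B"
  unfolding MV_on_def by blast

lemma finite_MV_on: "finite S \<Longrightarrow> finite V \<Longrightarrow> finite (MV_on S V)"
proof -
  have "MV_on S V = (\<lambda>(i, v). xmul i v) ` (S \<times> V)"
    unfolding MV_on_def by auto
  then show "finite S \<Longrightarrow> finite V \<Longrightarrow> finite (MV_on S V)" by simp
qed

lemma card_image_xmul: "card (xmul i ` V) = card V"
  by (rule card_image[OF inj_on_subset[OF inj_xmul]]) simp

lemma card_image_mmul: "card (mmul c ` V) = card V"
  by (rule card_image[OF inj_on_subset[OF inj_mmul]]) simp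

lemma monomials_on_mono:
  assumes "finite S" "T \<subseteq> S"
  shows "monomials_on T d \<subseteq> monomials_on S d"
proof
  fix v assume v: "v \<in> monomials_on T d"
  have "(\<Sum>k\<in>S. v k) = (\<Sum>k\<in>T. v k)"
    by (rule sum.mono_neutral_right) (use assms v in \<open>auto simp: monomials_on_def\<close>)
  then show "v \<in> monomials_on S d" using assms v by (auto simp: monomials_on_def)
qed

lemma monomials_on_insert:
  assumes "finite T" "x \<notin> T"
  shows "monomials_on (insert x T) d = (\<Union>t\<le>d. (\<lambda>b. b(x := t)) ` monomials_on T (d - t))"
proof (intro equalityI subsetI)
  fix a assume a: "a \<in> monomials_on (insert x T) d"
  have "(\<Sum>k\<in>T. (a(x := 0)) k) = (\<Sum>k\<in>T. a k)"
    using assms by (intro sum.cong) auto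
  then have "a(x := 0) \<in> monomials_on T (d - a x)" "a x \<le> d"
    using a assms by (auto simp: monomials_on_def)
  moreover have "a = (a(x := 0))(x := a x)" by simp
  ultimately show "a \<in> (\<Union>t\<le>d. (\<lambda>b. b(x := t)) ` monomials_on T (d - t))"
    by blast
next
  fix a assume "a \<in> (\<Union>t\<le>d. (\<lambda>b. b(x := t)) ` monomials_on T (d - t))"
  then obtain t b where t: "t \<le> d" and b: "b \<in> monomials_on T (d - t)" and a: "a = b(x := t)"
    by auto
  have "(\<Sum>k\<in>T. a k) = (\<Sum>k\<in>T. b k)"
    using assms a by (intro sum.cong) auto
  then show "a \<in> monomials_on (insert x T) d"
    using assms t a b by (auto simp: monomials_on_def)
qed

lemma finite_monomials_on: "finite S \<Longrightarrow> finite (monomials_on S d)"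
proof (induction S arbitrary: d rule: finite_induct)
  case empty
  have "monomials_on {} d \<subseteq> {\<lambda>_. 0}"
    by (auto simp: monomials_on_def)
  then show ?case by (rule finite_subset) simp
next
  case (insert x T)
  then show ?case by (simp add: monomials_on_insert)
qed

lemma card_monomials_on_insert:
  assumes "finite T" "x \<notin> T"
  shows "card (monomials_on (insert x T) d) = (\<Sum>t\<le>d. card (monomials_on T t))"
proof -
  have inj: "inj_on (\<lambda>b. b(x := t)) (monomials_on T e)" for t e
  proof (rule inj_onI)
    fix b b' assume "b \<in> monomials_on T e" "b' \<in> monomials_on T e" "b(x := t) = b'(x := t)"
    moreover have "b x = 0" "b' x = 0"
      using calculation(1,2) assms(2) by (simp_all add: monomials_on_support)
    ultimately show "b = b'" by (metis fun_upd_triv fun_upd_upd)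
  qed
  have "card (monomials_on (insert x T) d) = (\<Sum>t\<le>d. card ((\<lambda>b. b(x := t)) ` monomials_on T (d - t)))"
    unfolding monomials_on_insert[OF assms]
  proof (rule card_UN_disjoint)
    show "\<forall>t\<in>{..d}. \<forall>t'\<in>{..d}. t \<noteq> t' \<longrightarrow>
        (\<lambda>b. b(x := t)) ` monomials_on T (d - t) \<inter> (\<lambda>b. b(x := t')) ` monomials_on T (d - t') = {}"
      by (auto dest!: fun_cong[where x = x])
  qed (simp_all add: finite_monomials_on assms(1))
  also have "\<dots> = (\<Sum>t\<le>d. card (monomials_on T (d - t)))"
    by (simp add: card_image[OF inj])
  also have "\<dots> = (\<Sum>t\<le>d. card (monomials_on T t))"
    by (rule sum.reindex_bij_witness[of _ "\<lambda>t. d - t" "\<lambda>t. d - t"]) auto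
  finally show ?thesis .
qed

lemma card_monomials_on:
  assumes "finite S" "card S = Suc k"
  shows "card (monomials_on S d) = ((d + k) choose k)"
  using assms
proof (induction S arbitrary: k d rule: finite_induct)
  case (insert x T)
  show ?case
  proof (cases k)
    case 0
    then have "T = {}" using insert by simp
    have "monomials_on {x} d = {var_pow x d}"
      by (auto simp: monomials_on_def var_pow_def fun_eq_iff split: if_splits)
    then show ?thesis using \<open>T = {}\<close> 0 by simp
  next
    case (Suc k')
    then have "card (monomials_on (insert x T) d) = (\<Sum>t\<le>d. ((t + k') choose k'))"
      using insert by (simp add: card_monomials_on_insert)
    also have "\<dots> = (\<Sum>t\<le>d. ((k' + t) choose t))"
      by (intro sum.cong refl) (metis add.commute choose_add_swap)
    also have "\<dots> = ((d + k) choose k)"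
      using sum_choose_lower[of k' d] choose_add_swap[of d k] Suc by (simp add: add.commute)
    finally show ?thesis .
  qed
qed simp

section \<open>Compression\<close>

lemma card_le_card_if_fibers_le:
  assumes "finite A" "finite B" "\<And>y. card {a \<in> A. f a = y} \<le> card {b \<in> B. f b = y}"
  shows "card A \<le> card B"
proof -
  let ?K = "f ` (A \<union> B)"
  have K: "finite ?K" "f ` A \<subseteq> ?K" "f ` B \<subseteq> ?K"
    using assms(1,2) by auto
  have "card A = (\<Sum>y\<in>?K. card {a \<in> A. f a = y})"
    using sum.group[OF assms(1) K(1,2), of "\<lambda>_. 1::nat"] by simp
  also have "\<dots> \<le> (\<Sum>y\<in>?K. card {b \<in> B. f b = y})"
    by (rule sum_mono) (rule assms(3))
  also have "\<dots> = card B"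
    using sum.group[OF assms(2) K(1,3), of "\<lambda>_. 1::nat"] by simp
  finally show ?thesis .
qed

lemma sum_lessThan_card_le:
  assumes "finite T"
  shows "(\<Sum>t<card T. t) \<le> \<Sum>T"
  using assms
proof (induction "card T" arbitrary: T)
  case (Suc n)
  let ?M = "Max T"
  have M: "?M \<in> T"
    using Suc.hyps(2) by (intro Max_in[OF Suc.prems]) auto
  have "T \<subseteq> {..?M}" using Suc.prems by auto
  then have "n \<le> ?M" using card_mono[of "{..?M}" T] Suc.hyps(2) by simp
  moreover have "card (T - {?M}) = n"
    using Suc.hyps(2) M Suc.prems by simp
  then have "(\<Sum>t<n. t) \<le> \<Sum>(T - {?M})"
    using Suc.hyps(1)[of "T - {?M}"] Suc.prems by simp
  moreover have "\<Sum>T = ?M + \<Sum>(T - {?M})"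
    by (rule sum.remove[OF Suc.prems M])
  ultimately show ?case
    using Suc.hyps(2)[symmetric] by simp
qed simp

lemma sum_lessThan_card_less:
  assumes "finite T" "T \<noteq> {..<card T}"
  shows "(\<Sum>t<card T. t) < \<Sum>T"
proof -
  obtain x where x: "x \<in> T" "card T \<le> x"
  proof (rule ccontr)
    assume "\<not> thesis"
    then have "T \<subseteq> {..<card T}" using that by force
    then show False using assms(2) card_subset_eq[of "{..<card T}" T] by simp
  qed
  have card: "card T = Suc (card (T - {x}))"
    using card_Suc_Diff1[OF assms(1) x(1)] by simp
  then have "(\<Sum>t<card T. t) = (\<Sum>t<card (T - {x}). t) + card (T - {x})"
    by simp
  also have "\<dots> < \<Sum>(T - {x}) + x"
    using sum_lessThan_card_le[of "T - {x}"] assms(1) x(2) card by simp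
  also have "\<dots> = \<Sum>T"
    using sum.remove[OF assms(1) x(1), of "\<lambda>t. t"] by simp
  finally show ?thesis .
qed

definition erase_pair :: "nat \<Rightarrow> nat \<Rightarrow> (nat \<Rightarrow> nat) \<Rightarrow> (nat \<Rightarrow> nat)" where
  "erase_pair i j v = v(i := 0, j := 0)"

definition fiber :: "nat \<Rightarrow> nat \<Rightarrow> (nat \<Rightarrow> nat) set \<Rightarrow> (nat \<Rightarrow> nat) \<Rightarrow> (nat \<Rightarrow> nat) set" where
  "fiber i j X \<kappa> = {u \<in> X. erase_pair i j u = \<kappa>}"

text \<open>Compression from \<open>x\<^sub>j\<close> towards \<open>x\<^sub>i\<close>: in each fiber (exponents outside \<open>x\<^sub>i, x\<^sub>j\<close> fixed)
  keep as many monomials as \<open>X\<close> has there, namely those of smallest \<open>x\<^sub>j\<close>-exponent.\<close>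

definition compress :: "nat set \<Rightarrow> nat \<Rightarrow> nat \<Rightarrow> nat \<Rightarrow> (nat \<Rightarrow> nat) set \<Rightarrow> (nat \<Rightarrow> nat) set" where
  "compress S d i j X = {v \<in> monomials_on S d. v j < card (fiber i j X (erase_pair i j v))}"

definition stable :: "nat set \<Rightarrow> nat \<Rightarrow> (nat \<Rightarrow> nat) set \<Rightarrow> bool" where
  "stable S j X \<longleftrightarrow> (\<forall>w. xmul j w \<in> X \<longrightarrow> (\<forall>i\<in>S. xmul i w \<in> X))"

lemma erase_pair_apply: "erase_pair i j v k = (if k = i \<or> k = j then 0 else v k)"
  by (simp add: erase_pair_def)

lemma erase_pair_xmul: "erase_pair i j (xmul l v) = (if l = i \<or> l = j then erase_pair i j v else xmul l (erase_pair i j v))"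
  by (auto simp: erase_pair_def xmul_def fun_eq_iff)

lemma compress_subset: "compress S d i j X \<subseteq> monomials_on S d"
  by (auto simp: compress_def)

context
  fixes S :: "nat set" and i j :: nat
  assumes finS: "finite S" and iS: "i \<in> S" and jS: "j \<in> S" and ij: "i \<noteq> j"
begin

lemma sum_erase_pair: "(\<Sum>k\<in>S. v k) = v i + v j + (\<Sum>k\<in>S. erase_pair i j v k)"
proof -
  have remove: "(\<Sum>k\<in>S. f k) = f i + f j + (\<Sum>k\<in>S - {i} - {j}. f k)" for f :: "nat \<Rightarrow> nat"
  proof -
    have "(\<Sum>k\<in>S - {i}. f k) = f j + (\<Sum>k\<in>S - {i} - {j}. f k)"
      by (rule sum.remove) (use finS jS ij in auto)
    then show ?thesis
      using sum.remove[OF finS iS, of f] by simp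
  qed
  have "(\<Sum>k\<in>S - {i} - {j}. erase_pair i j v k) = (\<Sum>k\<in>S - {i} - {j}. v k)"
    by (rule sum.cong) (auto simp: erase_pair_apply)
  moreover have "erase_pair i j v i = 0" "erase_pair i j v j = 0"
    by (simp_all add: erase_pair_apply)
  ultimately show ?thesis
    using remove[of v] remove[of "erase_pair i j v"] by linarith
qed

lemma inj_on_fiber:
  assumes "X \<subseteq> monomials_on S e"
  shows "inj_on (\<lambda>v. v j) (fiber i j X \<kappa>)"
proof (rule inj_onI)
  fix u v assume uv: "u \<in> fiber i j X \<kappa>" "v \<in> fiber i j X \<kappa>" "u j = v j"
  then have erase: "erase_pair i j u = erase_pair i j v" by (simp add: fiber_def)
  have "u \<in> monomials_on S e" "v \<in> monomials_on S e"
    using uv assms by (auto simp: fiber_def)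
  then have "u i = v i"
    using sum_erase_pair[of u] sum_erase_pair[of v] erase uv(3) by (simp add: monomials_on_def)
  show "u = v"
  proof
    fix k
    show "u k = v k"
      using fun_cong[OF erase, of k] \<open>u i = v i\<close> uv(3) by (auto simp: erase_pair_apply split: if_splits)
  qed
qed

lemma finite_fiber: "X \<subseteq> monomials_on S e \<Longrightarrow> finite (fiber i j X \<kappa>)"
  using finite_monomials_on[OF finS] by (rule finite_subset[rotated]) (auto simp: fiber_def)

lemma card_fiber_le_Suc:
  assumes "X \<subseteq> monomials_on S e" "\<And>v. v \<in> fiber i j X \<kappa> \<Longrightarrow> v j \<le> m"
  shows "card (fiber i j X \<kappa>) \<le> Suc m"
proof -
  have "(\<lambda>v. v j) ` fiber i j X \<kappa> \<subseteq> {..m}"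
    using assms(2) by auto
  then have "card ((\<lambda>v. v j) ` fiber i j X \<kappa>) \<le> Suc m"
    using card_mono[of "{..m}"] by fastforce
  then show ?thesis
    using card_image[OF inj_on_fiber[OF assms(1)]] by simp
qed

lemma card_fiber_le:
  assumes "X \<subseteq> monomials_on S e"
  shows "card (fiber i j X \<kappa>) \<le> Suc (e - (\<Sum>k\<in>S. \<kappa> k))"
proof (rule card_fiber_le_Suc[OF assms])
  fix v assume "v \<in> fiber i j X \<kappa>"
  then show "v j \<le> e - (\<Sum>k\<in>S. \<kappa> k)"
    using assms sum_erase_pair[of v] by (auto simp: fiber_def monomials_on_def)
qed

lemma image_fiber_compress:
  assumes "X \<subseteq> monomials_on S d"
  shows "(\<lambda>v. v j) ` fiber i j (compress S d i j X) \<kappa> = {..<card (fiber i j X \<kappa>)}"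
proof (intro equalityI subsetI)
  fix t assume "t \<in> (\<lambda>v. v j) ` fiber i j (compress S d i j X) \<kappa>"
  then show "t \<in> {..<card (fiber i j X \<kappa>)}" by (auto simp: fiber_def compress_def)
next
  fix t assume t: "t \<in> {..<card (fiber i j X \<kappa>)}"
  then obtain x where x: "x \<in> fiber i j X \<kappa>" by (metis card.empty ex_in_conv lessThan_iff not_less0)
  have x': "x \<in> monomials_on S d" "erase_pair i j x = \<kappa>"
    using x assms by (auto simp: fiber_def)
  have \<kappa>: "\<kappa> i = 0" "\<kappa> j = 0" "\<And>k. k \<noteq> i \<Longrightarrow> k \<noteq> j \<Longrightarrow> \<kappa> k = x k"
    unfolding x'(2)[symmetric] by (simp_all add: erase_pair_apply)
  let ?r = "d - (\<Sum>k\<in>S. \<kappa> k)"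
  have "t \<le> ?r"
    using card_fiber_le[OF assms, of \<kappa>] t by simp
  have "(\<Sum>k\<in>S. \<kappa> k) \<le> d"
    using x' sum_erase_pair[of x] by (auto simp: monomials_on_def)
  let ?w = "\<kappa>(i := ?r - t, j := t)"
  have erase: "erase_pair i j ?w = \<kappa>"
    using \<kappa> by (auto simp: erase_pair_def fun_eq_iff)
  have "(\<Sum>k\<in>S. ?w k) = d"
    using sum_erase_pair[of ?w] erase ij \<open>t \<le> ?r\<close> \<open>(\<Sum>k\<in>S. \<kappa> k) \<le> d\<close> by simp
  moreover have "k \<in> S" if "?w k \<noteq> 0" for k
    using that x'(1) iS jS \<kappa>(3)[of k] by (auto simp: monomials_on_def split: if_splits)
  ultimately have "?w \<in> monomials_on S d"
    unfolding monomials_on_def by blast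
  moreover have "?w j < card (fiber i j X (erase_pair i j ?w))"
    using t erase by simp
  ultimately have "?w \<in> fiber i j (compress S d i j X) \<kappa>"
    using erase by (simp add: fiber_def compress_def)
  then show "t \<in> (\<lambda>v. v j) ` fiber i j (compress S d i j X) \<kappa>"
    by (metis (no_types, lifting) fun_upd_same image_eqI)
qed

lemma card_fiber_compress:
  assumes "X \<subseteq> monomials_on S d"
  shows "card (fiber i j (compress S d i j X) \<kappa>) = card (fiber i j X \<kappa>)"
  using card_image[OF inj_on_fiber[OF compress_subset[of S d i j X]]] image_fiber_compress[OF assms]
  by simp

lemma card_compress:
  assumes "X \<subseteq> monomials_on S d"
  shows "card (compress S d i j X) = card X"
proof -
  have fin: "finite X" "finite (compress S d i j X)"
    using finite_subset[OF assms finite_monomials_on[OF finS]]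
      finite_subset[OF compress_subset finite_monomials_on[OF finS]] by simp_all
  have fibers: "card {v \<in> compress S d i j X. erase_pair i j v = \<kappa>} = card {v \<in> X. erase_pair i j v = \<kappa>}"
    for \<kappa>
    using card_fiber_compress[OF assms, of \<kappa>] by (simp add: fiber_def)
  have "card (compress S d i j X) \<le> card X"
    by (rule card_le_card_if_fibers_le[where f = "erase_pair i j", OF fin(2,1)]) (simp add: fibers)
  moreover have "card X \<le> card (compress S d i j X)"
    by (rule card_le_card_if_fibers_le[where f = "erase_pair i j", OF fin(1,2)]) (simp add: fibers)
  ultimately show ?thesis by (rule le_antisym)
qed

lemma Suc_card_fiber_le_card_fiber_MV_on:
  assumes "X \<subseteq> monomials_on S d" "fiber i j X \<kappa> \<noteq> {}"
  shows "Suc (card (fiber i j X \<kappa>)) \<le> card (fiber i j (MV_on S X) \<kappa>)"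
proof -
  let ?F = "fiber i j X \<kappa>"
  have finF: "finite ?F" by (rule finite_fiber[OF assms(1)])
  let ?T = "(\<lambda>v. v j) ` ?F"
  have "Max ?T \<in> ?T" using finF assms(2) by (intro Max_in) auto
  then obtain u0 where u0: "u0 \<in> ?F" "u0 j = Max ?T" by (auto simp del: Max_in)
  then have u0_max: "u j \<le> u0 j" if "u \<in> ?F" for u
    using finF that by simp
  have sub: "insert (xmul j u0) (xmul i ` ?F) \<subseteq> fiber i j (MV_on S X) \<kappa>"
    using u0(1) iS jS unfolding fiber_def MV_on_def by (auto simp: erase_pair_xmul)
  have "xmul j u0 \<notin> xmul i ` ?F"
  proof
    assume "xmul j u0 \<in> xmul i ` ?F"
    then obtain u where u: "u \<in> ?F" "xmul j u0 = xmul i u" by blast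
    have "Suc (u0 j) = u j"
      using fun_cong[OF u(2), of j] ij by (simp add: xmul_apply)
    then show False
      using u0_max[OF u(1)] by simp
  qed
  then have "card (insert (xmul j u0) (xmul i ` ?F)) = Suc (card ?F)"
    using finF by (simp add: card_image_xmul)
  moreover have "finite (fiber i j (MV_on S X) \<kappa>)"
    by (rule finite_fiber[OF MV_on_subset_monomials_on[OF finS assms(1)]])
  ultimately show ?thesis
    using card_mono[OF _ sub] by simp
qed

lemma Suc_le_card_fiber_MV_on:
  assumes "X \<subseteq> monomials_on S d" "w \<in> fiber i j (MV_on S (compress S d i j X)) \<kappa>"
  shows "Suc (w j) \<le> card (fiber i j (MV_on S X) \<kappa>)"
proof -
  obtain l y where l: "l \<in> S" "y \<in> compress S d i j X" "w = xmul l y"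
    and \<kappa>: "erase_pair i j w = \<kappa>"
    using assms(2) by (auto simp: fiber_def MV_on_def)
  have y: "y j < card (fiber i j X (erase_pair i j y))"
    using l(2) by (simp add: compress_def)
  show ?thesis
  proof (cases "l = i \<or> l = j")
    case True
    then have "erase_pair i j y = \<kappa>" "w j \<le> Suc (y j)"
      using \<kappa> l(3) by (auto simp: erase_pair_xmul xmul_apply)
    moreover have "fiber i j X \<kappa> \<noteq> {}"
      using y calculation(1) by (metis card.empty less_zeroE)
    ultimately show ?thesis
      using Suc_card_fiber_le_card_fiber_MV_on[OF assms(1)] y by fastforce
  next
    case False
    then have \<kappa>': "xmul l (erase_pair i j y) = \<kappa>" "w j = y j"
      using \<kappa> l(3) by (auto simp: erase_pair_xmul xmul_apply)
    have "xmul l ` fiber i j X (erase_pair i j y) \<subseteq> fiber i j (MV_on S X) \<kappa>"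
      using l(1) \<kappa>' False unfolding fiber_def MV_on_def by (auto simp: erase_pair_xmul)
    then have "card (fiber i j X (erase_pair i j y)) \<le> card (fiber i j (MV_on S X) \<kappa>)"
      using card_mono[OF finite_fiber[OF MV_on_subset_monomials_on[OF finS assms(1)]]]
      by (metis card_image_xmul)
    then show ?thesis
      using y \<kappa>' by simp
  qed
qed

lemma card_MV_on_compress_le:
  assumes "X \<subseteq> monomials_on S d"
  shows "card (MV_on S (compress S d i j X)) \<le> card (MV_on S X)"
proof (rule card_le_card_if_fibers_le[where f = "erase_pair i j"])
  have "finite X" "finite (compress S d i j X)"
    using finite_subset[OF assms finite_monomials_on[OF finS]]
      finite_subset[OF compress_subset finite_monomials_on[OF finS]] by simp_all
  then show "finite (MV_on S (compress S d i j X))" "finite (MV_on S X)"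
    using finS by (simp_all add: finite_MV_on)
next
  fix \<kappa>
  let ?c = "card (fiber i j (MV_on S X) \<kappa>)"
  have mon: "MV_on S (compress S d i j X) \<subseteq> monomials_on S (Suc d)"
    by (rule MV_on_subset_monomials_on[OF finS compress_subset])
  have "card (fiber i j (MV_on S (compress S d i j X)) \<kappa>) \<le> Suc (?c - 1)"
    using Suc_le_card_fiber_MV_on[OF assms] by (intro card_fiber_le_Suc[OF mon]) force
  moreover have "?c = 0 \<Longrightarrow> fiber i j (MV_on S (compress S d i j X)) \<kappa> = {}"
    using Suc_le_card_fiber_MV_on[OF assms] by fastforce
  ultimately have "card (fiber i j (MV_on S (compress S d i j X)) \<kappa>) \<le> ?c"
    by (cases "?c = 0") auto
  then show "card {a \<in> MV_on S (compress S d i j X). erase_pair i j a = \<kappa>}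
      \<le> card {b \<in> MV_on S X. erase_pair i j b = \<kappa>}"
    by (simp add: fiber_def)
qed

lemma sum_fiber_compress_le:
  assumes "X \<subseteq> monomials_on S d"
  shows "(\<Sum>v\<in>fiber i j (compress S d i j X) \<kappa>. v j) \<le> (\<Sum>v\<in>fiber i j X \<kappa>. v j)"
    and "(\<lambda>v. v j) ` fiber i j X \<kappa> \<noteq> {..<card (fiber i j X \<kappa>)} \<Longrightarrow>
      (\<Sum>v\<in>fiber i j (compress S d i j X) \<kappa>. v j) < (\<Sum>v\<in>fiber i j X \<kappa>. v j)"
proof -
  let ?T = "(\<lambda>v. v j) ` fiber i j X \<kappa>"
  have card_T: "card ?T = card (fiber i j X \<kappa>)"
    by (rule card_image[OF inj_on_fiber[OF assms]])
  have compressed: "(\<Sum>v\<in>fiber i j (compress S d i j X) \<kappa>. v j) = (\<Sum>t<card ?T. t)"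
    using sum.reindex[OF inj_on_fiber[OF compress_subset[of S d i j X]], of "\<lambda>t. t"]
      image_fiber_compress[OF assms] card_T by simp
  have original: "(\<Sum>v\<in>fiber i j X \<kappa>. v j) = \<Sum>?T"
    using sum.reindex[OF inj_on_fiber[OF assms], of "\<lambda>t. t"] by simp
  have "finite ?T"
    using finite_fiber[OF assms] by simp
  then show "(\<Sum>v\<in>fiber i j (compress S d i j X) \<kappa>. v j) \<le> (\<Sum>v\<in>fiber i j X \<kappa>. v j)"
    and "?T \<noteq> {..<card (fiber i j X \<kappa>)} \<Longrightarrow>
      (\<Sum>v\<in>fiber i j (compress S d i j X) \<kappa>. v j) < (\<Sum>v\<in>fiber i j X \<kappa>. v j)"
    using sum_lessThan_card_le[of ?T] sum_lessThan_card_less[of ?T] compressed original card_T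
    by simp_all
qed

lemma sum_compress_less:
  assumes "X \<subseteq> monomials_on S d" "compress S d i j X \<noteq> X"
  shows "(\<Sum>v\<in>compress S d i j X. v j) < (\<Sum>v\<in>X. v j)"
proof -
  let ?Y = "compress S d i j X"
  have fin: "finite X" "finite ?Y"
    using finite_subset[OF assms(1) finite_monomials_on[OF finS]]
      finite_subset[OF compress_subset finite_monomials_on[OF finS]] by simp_all
  let ?K = "erase_pair i j ` (X \<union> ?Y)"
  have K: "finite ?K" "erase_pair i j ` X \<subseteq> ?K" "erase_pair i j ` ?Y \<subseteq> ?K"
    using fin by auto
  have by_fibers: "(\<Sum>v\<in>Z. v j) = (\<Sum>\<kappa>\<in>?K. \<Sum>v\<in>fiber i j Z \<kappa>. v j)"
    if "finite Z" "erase_pair i j ` Z \<subseteq> ?K" for Z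
    unfolding fiber_def by (rule sum.group[OF that(1) K(1) that(2), symmetric])
  have "\<not> X \<subseteq> ?Y"
    using card_subset_eq[OF fin(2)] card_compress[OF assms(1)] assms(2) by metis
  then obtain v where v: "v \<in> X" "v \<notin> ?Y" by blast
  let ?\<kappa> = "erase_pair i j v"
  have "\<not> v j < card (fiber i j X ?\<kappa>)"
    using v assms(1) by (auto simp: compress_def)
  moreover have "v j \<in> (\<lambda>v. v j) ` fiber i j X ?\<kappa>"
    using v by (auto simp: fiber_def)
  ultimately have "(\<lambda>v. v j) ` fiber i j X ?\<kappa> \<noteq> {..<card (fiber i j X ?\<kappa>)}"
    by auto
  then have "(\<Sum>\<kappa>\<in>?K. \<Sum>v\<in>fiber i j ?Y \<kappa>. v j) < (\<Sum>\<kappa>\<in>?K. \<Sum>v\<in>fiber i j X \<kappa>. v j)"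
    using v(1) sum_fiber_compress_le[OF assms(1)]
    by (intro sum_strict_mono_ex1[OF K(1)]) auto
  then show ?thesis
    using by_fibers[OF fin(1) K(2)] by_fibers[OF fin(2) K(3)] by simp
qed

lemma compress_fixed_imp_mem:
  assumes "compress S d i j X = X" "xmul j w \<in> X"
  shows "xmul i w \<in> X"
proof -
  have v: "xmul j w \<in> monomials_on S d" "xmul j w j < card (fiber i j X (erase_pair i j (xmul j w)))"
    using assms by (auto simp: compress_def)
  have "\<forall>k. xmul i w k \<noteq> 0 \<longrightarrow> k \<in> S"
  proof (intro allI impI)
    fix k assume "xmul i w k \<noteq> 0"
    then have "k = i \<or> xmul j w k \<noteq> 0" by (simp add: xmul_apply split: if_splits)
    then show "k \<in> S" using iS v(1) by (auto simp: monomials_on_def)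
  qed
  moreover have "(\<Sum>k\<in>S. xmul i w k) = (\<Sum>k\<in>S. xmul j w k)"
    using sum_xmul[OF finS iS] sum_xmul[OF finS jS] by simp
  ultimately have "xmul i w \<in> monomials_on S d"
    using v(1) unfolding monomials_on_def by simp
  moreover have "xmul i w j < xmul j w j"
    using ij by (simp add: xmul_apply)
  ultimately have "xmul i w \<in> compress S d i j X"
    using v(2) by (simp add: compress_def erase_pair_xmul)
  then show ?thesis using assms(1) by simp
qed

end

lemma stable_compression_exists:
  assumes "finite S" "j \<in> S" "V \<subseteq> monomials_on S d"
  obtains X where "X \<subseteq> monomials_on S d" "card X = card V" "card (MV_on S X) \<le> card (MV_on S V)"
    "stable S j X"
proof -
  let ?P = "\<lambda>X. X \<subseteq> monomials_on S d \<and> card X = card V \<and> card (MV_on S X) \<le> card (MV_on S V)"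
  obtain X where X: "?P X" and min: "\<And>Y. ?P Y \<Longrightarrow> (\<Sum>v\<in>X. v j) \<le> (\<Sum>v\<in>Y. v j)"
    using ex_has_least_nat[of ?P V "\<lambda>X. \<Sum>v\<in>X. v j"] assms(3) by auto
  have "stable S j X"
    unfolding stable_def
  proof (intro allI impI ballI)
    fix w i assume w: "xmul j w \<in> X" and i: "i \<in> S"
    show "xmul i w \<in> X"
    proof (cases "i = j")
      case False
      have "?P (compress S d i j X)"
        using X compress_subset card_compress[OF assms(1) i assms(2) False]
          card_MV_on_compress_le[OF assms(1) i assms(2) False] by (metis order_trans)
      then have "compress S d i j X = X"
        using min sum_compress_less[OF assms(1) i assms(2) False] X by (meson leD)
      then show ?thesis
        using compress_fixed_imp_mem[OF assms(1) i assms(2) False _ w] by simp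
    qed (use w in simp)
  qed
  then show thesis using X that by blast
qed

section \<open>Macaulay's theorem\<close>

lemma card_eq_card_zero_coord_add:
  assumes "finite X"
  shows "card X = card {v \<in> X. v j = 0} + card {w. xmul j w \<in> X}"
proof -
  have "X = {v \<in> X. v j = 0} \<union> xmul j ` {w. xmul j w \<in> X}"
  proof (intro equalityI subsetI)
    fix v assume v: "v \<in> X"
    show "v \<in> {v \<in> X. v j = 0} \<union> xmul j ` {w. xmul j w \<in> X}"
    proof (cases "v j = 0")
      case False
      then have "v = xmul j (v(j := v j - 1))" by (auto simp: xmul_def)
      then show ?thesis using v by (metis (mono_tags, lifting) UnI2 image_eqI mem_Collect_eq)
    qed (use v in simp)
  qed auto
  moreover have "{v \<in> X. v j = 0} \<inter> xmul j ` {w. xmul j w \<in> X} = {}"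
    by (auto simp: xmul_apply)
  moreover have "finite (xmul j ` {w. xmul j w \<in> X})"
    using assms by (rule finite_subset[rotated]) auto
  ultimately show ?thesis
    using assms card_Un_disjoint[of "{v \<in> X. v j = 0}" "xmul j ` {w. xmul j w \<in> X}"]
    by (metis (no_types, lifting) card_image_xmul finite_Un)
qed

lemma card_add_card_MV_on_slice_le:
  assumes "finite S" "j \<in> S" "finite X" "Y \<subseteq> MV_on S X" "\<And>y. y \<in> Y \<Longrightarrow> c < y j"
  shows "card Y + card (MV_on (S - {j}) {v \<in> X. v j = c}) \<le> card (MV_on S X)"
proof -
  let ?Z = "MV_on (S - {j}) {v \<in> X. v j = c}"
  have "y j = c" if "y \<in> ?Z" for y
    using that unfolding MV_on_def by (auto simp: xmul_apply)
  then have "Y \<inter> ?Z = {}"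
    using assms(5) by fastforce
  moreover have "finite Y"
    using finite_subset[OF assms(4) finite_MV_on[OF assms(1,3)]] .
  ultimately have "card (Y \<union> ?Z) = card Y + card ?Z"
    using assms(1,3) by (simp add: card_Un_disjoint finite_MV_on)
  moreover have "Y \<union> ?Z \<subseteq> MV_on S X"
    using assms(4) unfolding MV_on_def by auto
  then have "card (Y \<union> ?Z) \<le> card (MV_on S X)"
    by (rule card_mono[OF finite_MV_on[OF assms(1,3)]])
  ultimately show ?thesis by simp
qed

lemma zero_coord_subset_monomials_on:
  assumes "finite S" "X \<subseteq> monomials_on S d"
  shows "{v \<in> X. v j = 0} \<subseteq> monomials_on (S - {j}) d"
proof
  fix v assume v: "v \<in> {v \<in> X. v j = 0}"
  then have "(\<Sum>k\<in>S - {j}. v k) = (\<Sum>k\<in>S. v k)"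
    using assms(1) by (intro sum.mono_neutral_left) auto
  then show "v \<in> monomials_on (S - {j}) d"
    using v assms(2) by (auto simp: monomials_on_def)
qed

lemma MV_on_stable_subset: "stable S j X \<Longrightarrow> MV_on S {w. xmul j w \<in> X} \<subseteq> X"
  unfolding stable_def MV_on_def by auto

text \<open>Splitting off the monomials divisible by \<open>x\<^sub>j\<close> in a stable set reduces Macaulay's bound to
  one variable less (for those not divisible by \<open>x\<^sub>j\<close>) and one degree less (for the quotient by \<open>x\<^sub>j\<close>).\<close>

lemma macaulay_stable_step:
  assumes "finite S" "j \<in> S" "finite X" "stable S j X"
    and quotient: "mac_up_rec (Suc k) (card {w. xmul j w \<in> X}) \<le> card (MV_on S {w. xmul j w \<in> X})"
    and zero: "mac_up_rec k (card {v \<in> X. v j = 0}) \<le> card (MV_on (S - {j}) {v \<in> X. v j = 0})"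
  shows "mac_up_rec (Suc k) (card X) \<le> card (MV_on S X)"
proof -
  let ?W = "{w. xmul j w \<in> X}"
  have "mac_up_rec (Suc k) (card ?W) \<le> card X"
    using quotient card_mono[OF assms(3) MV_on_stable_subset[OF assms(4)]] by linarith
  then have "mac_up_rec (Suc k) (card X) \<le> card X + mac_up_rec k (card X - card ?W)"
    by (rule mac_up_rec_le_add_diff)
  moreover have "card X - card ?W = card {v \<in> X. v j = 0}"
    using card_eq_card_zero_coord_add[OF assms(3), of j] by simp
  moreover have "card (xmul j ` X) + card (MV_on (S - {j}) {v \<in> X. v j = 0}) \<le> card (MV_on S X)"
    using assms(2) by (intro card_add_card_MV_on_slice_le[OF assms(1-3)]) (auto simp: MV_on_def xmul_apply)
  ultimately show ?thesis
    using zero by (simp add: card_image_xmul)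
qed

lemma macaulay_degree_0:
  assumes "finite S" "card S = Suc k" "V \<subseteq> monomials_on S 0"
  shows "mac_up_rec k (card V) \<le> card (MV_on S V)"
proof -
  have "monomials_on S 0 = {\<lambda>_. 0}"
    using assms(1) by (auto simp: monomials_on_def)
  then have "V = {} \<or> V = {\<lambda>_. 0}"
    using assms(3) by (simp add: subset_singleton_iff)
  then show ?thesis
  proof (elim disjE)
    assume V: "V = {\<lambda>_. 0}"
    have "inj_on (\<lambda>i. xmul i (\<lambda>_. 0)) S"
      by (rule inj_onI) (metis xmul_apply Zero_not_Suc)
    moreover have "MV_on S V = (\<lambda>i. xmul i (\<lambda>_. 0)) ` S"
      unfolding MV_on_def V by auto
    ultimately show ?thesis
      using V assms(2) mac_up_rec_binom[of k 0] by (simp add: card_image)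
  qed simp
qed

theorem macaulay:
  assumes "finite S" "card S = Suc k" "V \<subseteq> monomials_on S d"
  shows "mac_up_rec k (card V) \<le> card (MV_on S V)"
  using assms
proof (induction k arbitrary: S d V)
  case 0
  then obtain j where "S = {j}" by (auto simp: card_Suc_eq)
  then have "MV_on S V = xmul j ` V" unfolding MV_on_def by auto
  then show ?case by (simp add: card_image_xmul)
next
  case (Suc k)
  note fewer_vars = Suc.IH
  have finS: "finite S" and cardS: "card S = Suc (Suc k)"
    using Suc.prems(1,2) by simp_all
  obtain j where j: "j \<in> S" using cardS by (metis card.empty ex_in_conv nat.distinct(1))
  from Suc.prems(3) show ?case
  proof (induction d arbitrary: V)
    case 0
    then show ?case by (rule macaulay_degree_0[OF finS cardS])
  next
    case (Suc d)
    obtain X where X: "X \<subseteq> monomials_on S (Suc d)" "card X = card V" "card (MV_on S X) \<le> card (MV_on S V)"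
      and stable: "stable S j X"
      using stable_compression_exists[OF finS j Suc.prems] by blast
    have finX: "finite X"
      using finite_subset[OF X(1) finite_monomials_on[OF finS]] .
    have "{w. xmul j w \<in> X} \<subseteq> monomials_on S d"
      using X(1) xmul_mem_monomials_on_iff[OF finS j] by auto
    moreover have "{v \<in> X. v j = 0} \<subseteq> monomials_on (S - {j}) (Suc d)"
      by (rule zero_coord_subset_monomials_on[OF finS X(1)])
    moreover have "card (S - {j}) = Suc k"
      using cardS j finS by simp
    ultimately have "mac_up_rec (Suc k) (card X) \<le> card (MV_on S X)"
      using Suc.IH fewer_vars[of "S - {j}"] finS
      by (intro macaulay_stable_step[OF finS j finX stable]) simp_all
    then show ?case using X(2,3) by simp
  qed
qed

section \<open>Lex segments and strict subadditivity\<close>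

lemma mmul_var_pow_image_subset:
  assumes "finite S" "j \<in> S" "V \<subseteq> monomials_on S d"
  shows "mmul (var_pow j t) ` V \<subseteq> monomials_on S (t + d)"
  using assms mmul_mem_monomials_on[OF var_pow_mem_monomials_on[OF assms(1,2)]] by blast

context
  fixes S :: "nat set" and j a p :: nat and B :: "(nat \<Rightarrow> nat) set"
  assumes finS: "finite S" and jS: "j \<in> S" and a_le: "a \<le> p"
    and B: "B \<subseteq> monomials_on (S - {j}) (Suc a)" and a_less: "B \<noteq> {} \<Longrightarrow> a < p"
begin

definition lex_extend :: "(nat \<Rightarrow> nat) set" where
  "lex_extend = mmul (var_pow j (p - a)) ` monomials_on S a \<union> mmul (var_pow j (p - Suc a)) ` B"

lemma lex_extend_subset: "lex_extend \<subseteq> monomials_on S p"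
proof -
  have "mmul (var_pow j (p - a)) ` monomials_on S a \<subseteq> monomials_on S p"
    using mmul_var_pow_image_subset[OF finS jS subset_refl[of "monomials_on S a"], of "p - a"] a_le
    by simp
  moreover have "mmul (var_pow j (p - Suc a)) ` B \<subseteq> monomials_on S p"
  proof (cases "B = {}")
    case False
    then show ?thesis
      using mmul_var_pow_image_subset[OF finS jS order_trans[OF B monomials_on_mono[OF finS Diff_subset]], of "p - Suc a"] a_less by simp
  qed simp
  ultimately show ?thesis by (simp add: lex_extend_def)
qed

lemma var_pow_mem_lex_extend: "var_pow j p \<in> lex_extend"
proof -
  have "mmul (var_pow j (p - a)) (var_pow j a) = var_pow j p"
    using a_le by (simp add: mmul_var_pow)
  then show ?thesis
    unfolding lex_extend_def using var_pow_mem_monomials_on[OF finS jS] by (metis UnI1 image_eqI)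
qed

lemma card_lex_extend:
  assumes "card S = Suc k"
  shows "card lex_extend = ((a + k) choose k) + card B"
proof -
  have "b j = 0" if "b \<in> B" for b
    using that B monomials_on_support by blast
  then have "v j = p - Suc a" if "v \<in> mmul (var_pow j (p - Suc a)) ` B" for v
    using that by (auto simp: mmul_def var_pow_def)
  moreover have "p - a \<le> v j" if "v \<in> mmul (var_pow j (p - a)) ` monomials_on S a" for v
    using that by (auto simp: mmul_def var_pow_def)
  ultimately have "mmul (var_pow j (p - a)) ` monomials_on S a \<inter> mmul (var_pow j (p - Suc a)) ` B = {}"
    using a_less by fastforce
  moreover have "finite B"
    using finite_subset[OF B finite_monomials_on] finS by simp
  ultimately have "card lex_extend
      = card (mmul (var_pow j (p - a)) ` monomials_on S a) + card (mmul (var_pow j (p - Suc a)) ` B)"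
    unfolding lex_extend_def by (intro card_Un_disjoint) (simp_all add: finite_monomials_on finS)
  then show ?thesis
    using card_monomials_on[OF finS assms] by (simp add: card_image_mmul)
qed

lemma MV_on_lex_extend_subset:
  "MV_on S lex_extend \<subseteq> mmul (var_pow j (p - a)) ` monomials_on S (Suc a)
     \<union> mmul (var_pow j (p - Suc a)) ` MV_on (S - {j}) B"
proof
  fix w assume "w \<in> MV_on S lex_extend"
  then obtain l e where l: "l \<in> S" and e: "e \<in> lex_extend" and w: "w = xmul l e"
    unfolding MV_on_def by blast
  show "w \<in> mmul (var_pow j (p - a)) ` monomials_on S (Suc a) \<union> mmul (var_pow j (p - Suc a)) ` MV_on (S - {j}) B"
  proof (cases "e \<in> mmul (var_pow j (p - a)) ` monomials_on S a")
    case True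
    then obtain v where "v \<in> monomials_on S a" "e = mmul (var_pow j (p - a)) v" by blast
    then show ?thesis
      using w l xmul_mem_monomials_on_iff[OF finS l] by (auto simp: xmul_mmul)
  next
    case False
    then obtain b where b: "b \<in> B" "e = mmul (var_pow j (p - Suc a)) b"
      using e unfolding lex_extend_def by blast
    show ?thesis
    proof (cases "l = j")
      case True
      have "a < p" using a_less b(1) by blast
      then have "w = mmul (var_pow j (p - a)) b"
        using w b True by (auto simp: xmul_apply mmul_def var_pow_def fun_eq_iff)
      then show ?thesis using b(1) B monomials_on_mono[OF finS Diff_subset] by blast
    next
      case False
      then have "xmul l b \<in> MV_on (S - {j}) B"
        using l b(1) unfolding MV_on_def by blast
      then show ?thesis using w b by (auto simp: xmul_mmul)
    qed
  qed
qed

lemma card_MV_on_lex_extend_le: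
  assumes "card S = Suc k"
  shows "card (MV_on S lex_extend) \<le> ((Suc a + k) choose k) + card (MV_on (S - {j}) B)"
proof -
  have "finite B"
    using finite_subset[OF B finite_monomials_on] finS by simp
  then have "finite (mmul (var_pow j (p - a)) ` monomials_on S (Suc a) \<union> mmul (var_pow j (p - Suc a)) ` MV_on (S - {j}) B)"
    using finS by (simp add: finite_monomials_on finite_MV_on)
  then have "card (MV_on S lex_extend) \<le>
      card (mmul (var_pow j (p - a)) ` monomials_on S (Suc a)) + card (mmul (var_pow j (p - Suc a)) ` MV_on (S - {j}) B)"
    using card_mono[OF _ MV_on_lex_extend_subset] card_Un_le order_trans by blast
  then show ?thesis
    using card_monomials_on[OF finS assms] by (simp add: card_image_mmul)
qed

end

lemma binom_leading_le:
  assumes "((a + Suc k) choose (Suc k)) + s \<le> ((p + Suc k) choose (Suc k))"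
  shows "a \<le> p" and "s \<noteq> 0 \<Longrightarrow> a < p"
proof -
  show a_le: "a \<le> p"
  proof (rule ccontr)
    assume "\<not> a \<le> p"
    then have "((p + Suc k) choose (Suc k)) < ((a + Suc k) choose (Suc k))"
      by (intro choose_add_strict_mono) auto
    then show False using assms by linarith
  qed
  show "s \<noteq> 0 \<Longrightarrow> a < p"
    using a_le assms by (cases "a = p") auto
qed

lemma lex_extend_step:
  assumes "finite S" "card S = Suc (Suc k)" "j \<in> S"
    and h: "h = ((a + Suc k) choose (Suc k)) + s" "s < ((a + Suc k) choose k)"
      "h \<le> ((p + Suc k) choose (Suc k))"
    and B: "B \<subseteq> monomials_on (S - {j}) (Suc a)" "card B = s" "card (MV_on (S - {j}) B) \<le> mac_up_rec k s"
  shows "lex_extend S j a p B \<subseteq> monomials_on S p" "card (lex_extend S j a p B) = h"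
    "card (MV_on S (lex_extend S j a p B)) \<le> mac_up_rec (Suc k) h" "var_pow j p \<in> lex_extend S j a p B"
proof -
  have "finite B"
    using finite_subset[OF B(1) finite_monomials_on] assms(1) by simp
  then have a_le: "a \<le> p" and a_less: "B \<noteq> {} \<Longrightarrow> a < p"
    using binom_leading_le[of a k s p] h(1,3) B(2) by auto
  note lex = lex_extend_subset[OF assms(1,3) a_le B(1) a_less]
    var_pow_mem_lex_extend[OF assms(1,3) a_le B(1) a_less]
    card_lex_extend[OF assms(1,3) a_le B(1) a_less assms(2)]
    card_MV_on_lex_extend_le[OF assms(1,3) a_le B(1) a_less assms(2)]
  then show "lex_extend S j a p B \<subseteq> monomials_on S p" "card (lex_extend S j a p B) = h"
    "var_pow j p \<in> lex_extend S j a p B"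
    using h(1) B(2) by simp_all
  show "card (MV_on S (lex_extend S j a p B)) \<le> mac_up_rec (Suc k) h"
    using lex(4) B(3) h(1) mac_up_rec_block[OF h(2)] by simp
qed

lemma lex_set_exists:
  assumes "finite S" "card S = Suc k" "j \<in> S" "h \<le> ((p + k) choose k)"
  obtains E where "E \<subseteq> monomials_on S p" "card E = h" "card (MV_on S E) \<le> mac_up_rec k h"
    "0 < h \<Longrightarrow> var_pow j p \<in> E"
  using assms
proof (induction k arbitrary: S j h p thesis)
  case 0
  then have "S = {j}" by (auto simp: card_Suc_eq)
  then have "MV_on S {} = {}" "MV_on S {var_pow j p} = {xmul j (var_pow j p)}"
    unfolding MV_on_def by auto
  then show ?case
    using "0.prems"(1)[of "{}"] "0.prems"(1)[of "{var_pow j p}"] "0.prems"(5)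
      var_pow_mem_monomials_on[OF "0.prems"(2,4)]
    by (cases h) simp_all
next
  case (Suc k)
  show ?case
  proof (cases "h = 0")
    case True
    then show ?thesis using Suc.prems(1)[of "{}"] by (simp add: MV_on_def)
  next
    case False
    then obtain a s where h: "h = ((a + Suc k) choose (Suc k)) + s" and s: "s < ((a + Suc k) choose k)"
      by (rule binom_decomp)
    have finS': "finite (S - {j})" and cardS': "card (S - {j}) = Suc k"
      using Suc.prems(2-4) by simp_all
    then have "S - {j} \<noteq> {}" by (metis card.empty nat.distinct(1))
    then obtain j' where j': "j' \<in> S - {j}" by blast
    have s_le: "s \<le> ((Suc a + k) choose k)"
      using s by simp
    obtain B where "B \<subseteq> monomials_on (S - {j}) (Suc a)" "card B = s"
      "card (MV_on (S - {j}) B) \<le> mac_up_rec k s"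
      by (rule Suc.IH[OF _ finS' cardS' j' s_le]) blast
    from lex_extend_step[OF Suc.prems(2-4) h s Suc.prems(5) this] show ?thesis
      by (rule Suc.prems(1))
  qed
qed

lemma mmul_var_pow_images_disjoint:
  assumes "finite S" "i \<in> S" "j \<in> S" "i \<noteq> j" "X \<subseteq> monomials_on S p" "Y \<subseteq> monomials_on S p"
  shows "mmul (var_pow j (Suc p)) ` X \<inter> mmul (var_pow i (Suc p)) ` Y = {}"
proof (intro equals0I)
  fix v assume v: "v \<in> mmul (var_pow j (Suc p)) ` X \<inter> mmul (var_pow i (Suc p)) ` Y"
  have "Suc p \<le> v j"
    using IntD1[OF v] by (auto simp: mmul_def var_pow_def)
  moreover have "Suc p \<le> v i"
    using IntD2[OF v] by (auto simp: mmul_def var_pow_def)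
  moreover have "v \<in> monomials_on S (Suc p + p)"
    using IntD1[OF v] mmul_var_pow_image_subset[OF assms(1,3,5)] by blast
  moreover have "(\<Sum>k\<in>{i, j}. v k) \<le> (\<Sum>k\<in>S. v k)"
    using assms(1-3) by (intro sum_mono2) auto
  ultimately show False
    using assms(4) by (simp add: monomials_on_def)
qed

lemma card_MV_on_Un_less:
  assumes "finite S" "finite A" "finite B" "z \<in> MV_on S A" "z \<in> MV_on S B"
  shows "card (MV_on S (A \<union> B)) < card (MV_on S A) + card (MV_on S B)"
proof -
  have fin: "finite (MV_on S A)" "finite (MV_on S B)"
    using assms(1-3) by (simp_all add: finite_MV_on)
  then have "0 < card (MV_on S A \<inter> MV_on S B)"
    using assms(4,5) by (auto simp: card_gt_0_iff)
  then show ?thesis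
    using card_Un_Int[OF fin] by (simp add: MV_on_Un)
qed

text \<open>Place lex sets of sizes \<open>x\<close> and \<open>y\<close> in disjoint regions of one degree whose upper
  shadows still meet in \<open>x\<^sub>1\<^bsup>p+1\<^esup>x\<^sub>2\<^bsup>p+1\<^esup>\<close>, and apply Macaulay's theorem to their union.\<close>

lemma mac_up_rec_add_less:
  assumes "0 < x" "0 < y"
  shows "mac_up_rec (Suc k) (x + y) < mac_up_rec (Suc k) x + mac_up_rec (Suc k) y"
proof -
  define S where "S = {1..Suc (Suc k)}"
  define p where "p = x + y"
  have S: "finite S" "card S = Suc (Suc k)" "1 \<in> S" "2 \<in> S"
    by (auto simp: S_def)
  have "Suc p \<le> ((p + Suc k) choose (Suc k))" by (rule Suc_le_choose_add)
  then have "x \<le> ((p + Suc k) choose (Suc k))" "y \<le> ((p + Suc k) choose (Suc k))"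
    by (simp_all add: p_def)
  then obtain Ex Ey where Ex: "Ex \<subseteq> monomials_on S p" "card Ex = x"
      "card (MV_on S Ex) \<le> mac_up_rec (Suc k) x" "var_pow 1 p \<in> Ex"
    and Ey: "Ey \<subseteq> monomials_on S p" "card Ey = y"
      "card (MV_on S Ey) \<le> mac_up_rec (Suc k) y" "var_pow 2 p \<in> Ey"
    using lex_set_exists[OF S(1,2,3)] lex_set_exists[OF S(1,2,4)] assms by metis
  have fin: "finite Ex" "finite Ey"
    using finite_subset[OF Ex(1) finite_monomials_on[OF S(1)]]
      finite_subset[OF Ey(1) finite_monomials_on[OF S(1)]] by simp_all
  let ?A = "mmul (var_pow 2 (Suc p)) ` Ex"
  let ?B = "mmul (var_pow 1 (Suc p)) ` Ey"
  have A: "?A \<subseteq> monomials_on S (Suc p + p)" and B: "?B \<subseteq> monomials_on S (Suc p + p)"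
    using mmul_var_pow_image_subset[OF S(1,4) Ex(1), of "Suc p"]
      mmul_var_pow_image_subset[OF S(1,3) Ey(1), of "Suc p"] by simp_all
  have "?A \<inter> ?B = {}"
    by (rule mmul_var_pow_images_disjoint[OF S(1,3,4) _ Ex(1) Ey(1)]) simp
  then have "card (?A \<union> ?B) = x + y"
    using fin Ex(2) Ey(2) by (simp add: card_Un_disjoint card_image_mmul)
  then have "mac_up_rec (Suc k) (x + y) \<le> card (MV_on S (?A \<union> ?B))"
    using macaulay[OF S(1,2)] A B by (metis Un_subset_iff)
  also have "\<dots> < card (MV_on S ?A) + card (MV_on S ?B)"
  proof (rule card_MV_on_Un_less[OF S(1)])
    let ?z = "\<lambda>k::nat. if k = 1 \<or> k = 2 then Suc p else 0"
    have "?z = xmul 1 (mmul (var_pow 2 (Suc p)) (var_pow 1 p))"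
      "?z = xmul 2 (mmul (var_pow 1 (Suc p)) (var_pow 2 p))"
      by (auto simp: xmul_def mmul_def var_pow_def)
    then show "?z \<in> MV_on S ?A" "?z \<in> MV_on S ?B"
      using Ex(4) Ey(4) S(3,4) unfolding MV_on_def by blast+
  qed (use fin in simp_all)
  also have "\<dots> \<le> mac_up_rec (Suc k) x + mac_up_rec (Suc k) y"
    using Ex(3) Ey(3) by (simp add: MV_on_image_mmul card_image_mmul)
  finally show ?thesis .
qed

lemma hbar_le_if_mac_up_rec_split:
  assumes "mac_up_rec (Suc k) (h - c) + mac_up_rec k c \<le> mac_up_rec (Suc k) h" "0 < c" "2 \<le> h"
  shows "hbar (Suc k) h \<le> c"
proof (rule ccontr)
  obtain a where a: "((a + Suc k) choose (Suc k)) < h" "h \<le> ((Suc a + Suc k) choose (Suc k))"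
    and hbar: "hbar (Suc k) h = h - ((a + Suc k) choose (Suc k))"
    using hbar_eq[of "Suc k" h] assms(3) by auto
  define r where "r = h - ((a + Suc k) choose (Suc k))"
  assume "\<not> hbar (Suc k) h \<le> c"
  then have c: "c < r" using hbar r_def by simp
  have r: "r \<le> ((a + Suc k) choose k)"
    using a choose_add_Suc_Suc[of a k] r_def by simp
  have "mac_up_rec (Suc k) h = ((Suc a + Suc k) choose (Suc k)) + mac_up_rec k r"
    using mac_up_rec_split[OF r] a(1) r_def by simp
  moreover have "mac_up_rec (Suc k) (h - c) = ((Suc a + Suc k) choose (Suc k)) + mac_up_rec k (r - c)"
    using mac_up_rec_split[of "r - c" a k] r c a(1) r_def by (simp add: add_diff_assoc)
  ultimately have split: "mac_up_rec k (r - c) + mac_up_rec k c \<le> mac_up_rec k r"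
    using assms(1) by simp
  show False
  proof (cases k)
    case 0
    then show False using r c assms(2) by simp
  next
    case (Suc k')
    then show False
      using split mac_up_rec_add_less[of "r - c" c k'] c assms(2) by simp
  qed
qed

section \<open>Gotzmann sets\<close>

lemma erase_var_mem_monomials_on:
  assumes "finite S" "i \<in> S" "v \<in> monomials_on S d"
  shows "v(i := 0) \<in> monomials_on (S - {i}) (d - v i)"
proof -
  have "(\<Sum>k\<in>S. v k) = v i + (\<Sum>k\<in>S - {i}. v k)"
    using assms(1,2) by (simp add: sum.remove)
  moreover have "(\<Sum>k\<in>S - {i}. v k) = (\<Sum>k\<in>S - {i}. (v(i := 0)) k)"
    by (intro sum.cong) auto
  moreover have "(\<Sum>k\<in>S. v k) = d"
    using assms(3) by (simp add: monomials_on_def)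
  ultimately have "(\<Sum>k\<in>S - {i}. (v(i := 0)) k) = d - v i"
    by linarith
  moreover have "\<forall>k. (v(i := 0)) k \<noteq> 0 \<longrightarrow> k \<in> S - {i}"
    using assms(3) by (auto simp: monomials_on_def)
  ultimately show ?thesis
    by (simp add: monomials_on_def)
qed

lemma MV_on_image_erase_var_subset:
  "MV_on (S - {i}) ((\<lambda>v. v(i := 0)) ` D) \<subseteq> (\<lambda>v. v(i := 0)) ` MV_on (S - {i}) D"
proof
  fix w assume "w \<in> MV_on (S - {i}) ((\<lambda>v. v(i := 0)) ` D)"
  then obtain l v where l: "l \<in> S - {i}" "v \<in> D" "w = xmul l (v(i := 0))"
    unfolding MV_on_def by blast
  then have "w = (xmul l v)(i := 0)"
    by (auto simp: xmul_def fun_eq_iff)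
  moreover have "xmul l v \<in> MV_on (S - {i}) D"
    using l unfolding MV_on_def by blast
  ultimately show "w \<in> (\<lambda>v. v(i := 0)) ` MV_on (S - {i}) D" by blast
qed

lemma macaulay_slice:
  assumes "finite S" "card S = Suc (Suc k)" "i \<in> S" "D \<subseteq> monomials_on S d" "\<And>v. v \<in> D \<Longrightarrow> v i = c"
  shows "mac_up_rec k (card D) \<le> card (MV_on (S - {i}) D)"
proof -
  let ?\<psi> = "\<lambda>v :: nat \<Rightarrow> nat. v(i := 0)"
  have "?\<psi> ` D \<subseteq> monomials_on (S - {i}) (d - c)"
    using erase_var_mem_monomials_on[OF assms(1,3)] assms(4,5) by force
  then have mac: "mac_up_rec k (card (?\<psi> ` D)) \<le> card (MV_on (S - {i}) (?\<psi> ` D))"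
    using assms(1-3) by (intro macaulay) auto
  have "inj_on ?\<psi> D"
  proof (rule inj_onI)
    fix v w assume vw: "v \<in> D" "w \<in> D" "?\<psi> v = ?\<psi> w"
    show "v = w"
    proof
      fix k show "v k = w k"
        using fun_cong[OF vw(3), of k] assms(5)[OF vw(1)] assms(5)[OF vw(2)] by (cases "k = i") auto
    qed
  qed
  have fin: "finite (MV_on (S - {i}) D)"
    using finite_subset[OF assms(4) finite_monomials_on[OF assms(1)]] assms(1) by (simp add: finite_MV_on)
  have "card (MV_on (S - {i}) (?\<psi> ` D)) \<le> card (?\<psi> ` MV_on (S - {i}) D)"
    by (rule card_mono[OF finite_imageI[OF fin] MV_on_image_erase_var_subset])
  also have "\<dots> \<le> card (MV_on (S - {i}) D)"
    by (rule card_image_le[OF fin])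
  finally show ?thesis
    using mac by (simp add: card_image[OF \<open>inj_on ?\<psi> D\<close>])
qed

lemma mgcd_le: "finite V \<Longrightarrow> v \<in> V \<Longrightarrow> mgcd V k \<le> v k"
  by (simp add: mgcd_def)

lemma mgcd_attained: "finite V \<Longrightarrow> V \<noteq> {} \<Longrightarrow> \<exists>v\<in>V. v k = mgcd V k"
  unfolding mgcd_def using Min_in[of "(\<lambda>v. v k) ` V"] by fastforce

lemma Dset_eq_min_slice:
  assumes "1 < card V" "V \<subseteq> monomials n d"
  shows "Dset n d i V = {v \<in> V. v i = mgcd V i}"
proof -
  have fin: "finite V"
    using assms(1) by (cases "finite V") simp_all
  have "mdvd (xmul i (mgcd V)) v \<longleftrightarrow> mgcd V i < v i" if v: "v \<in> V" for v
  proof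
    assume "mdvd (xmul i (mgcd V)) v"
    then have "xmul i (mgcd V) i \<le> v i" unfolding mdvd_def by blast
    then show "mgcd V i < v i" by (simp add: xmul_apply)
  next
    assume "mgcd V i < v i"
    then show "mdvd (xmul i (mgcd V)) v"
      using mgcd_le[OF fin v] unfolding mdvd_def by (simp add: xmul_apply Suc_le_eq)
  qed
  then have "\<not> mdvd (xmul i (mgcd V)) v \<longleftrightarrow> v i = mgcd V i" if "v \<in> V" for v
    using mgcd_le[OF fin that, of i] that by auto
  then show ?thesis
    using assms by (auto simp: Dset_def Kset_def)
qed

lemma gotzmann_min_slice:
  assumes "finite S" "card S = Suc (Suc k)" "i \<in> S" "V \<subseteq> monomials_on S d" "V \<noteq> {}"
    and gotzmann: "card (MV_on S V) = mac_up_rec (Suc k) (card V)"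
  defines "D \<equiv> {v \<in> V. v i = mgcd V i}"
  shows "card V + mac_up_rec k (card D) \<le> mac_up_rec (Suc k) (card V)"
    and "mac_up_rec (Suc k) (card V - card D) + mac_up_rec k (card D) \<le> mac_up_rec (Suc k) (card V)"
    and "0 < card D"
proof -
  let ?u = "mgcd V i"
  let ?W = "{v \<in> V. ?u < v i}"
  have fin: "finite V"
    using finite_subset[OF assms(4) finite_monomials_on[OF assms(1)]] .
  have D_slice: "mac_up_rec k (card D) \<le> card (MV_on (S - {i}) D)"
    using assms(4) by (intro macaulay_slice[OF assms(1-3), of _ d ?u]) (auto simp: D_def)
  have "card (xmul i ` V) + card (MV_on (S - {i}) D) \<le> card (MV_on S V)"
    unfolding D_def using assms(3) mgcd_le[OF fin]
    by (intro card_add_card_MV_on_slice_le[OF assms(1,3) fin]) (auto simp: MV_on_def xmul_apply less_Suc_eq_le)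
  then show "card V + mac_up_rec k (card D) \<le> mac_up_rec (Suc k) (card V)"
    using D_slice gotzmann by (simp add: card_image_xmul)
  have "card ?W = card V - card D"
  proof -
    have "v \<in> D \<union> ?W" if "v \<in> V" for v
      using mgcd_le[OF fin that, of i] that by (auto simp: D_def)
    then have "V = D \<union> ?W" "D \<inter> ?W = {}"
      by (auto simp: D_def)
    then show ?thesis
      using fin by (metis card_Un_disjoint finite_Un add_diff_cancel_left')
  qed
  then have "mac_up_rec (Suc k) (card V - card D) \<le> card (MV_on S ?W)"
    using assms(1,2,4) macaulay[of S "Suc k" ?W d] by auto
  moreover have "card (MV_on S ?W) + card (MV_on (S - {i}) D) \<le> card (MV_on S V)"
    unfolding D_def
    by (intro card_add_card_MV_on_slice_le[OF assms(1,3) fin]) (auto simp: MV_on_def xmul_apply)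
  ultimately show "mac_up_rec (Suc k) (card V - card D) + mac_up_rec k (card D) \<le> mac_up_rec (Suc k) (card V)"
    using D_slice gotzmann by linarith
  show "0 < card D"
    using mgcd_attained[OF fin assms(5)] fin by (auto simp: D_def card_gt_0_iff)
qed

lemma gotzmann_min_slice_bounds:
  assumes "finite S" "card S = Suc (Suc k)" "i \<in> S" "V \<subseteq> monomials_on S d" "1 < card V"
    and "card (MV_on S V) = mac_up_rec (Suc k) (card V)"
  shows "hbar (Suc k) (card V) \<le> card {v \<in> V. v i = mgcd V i}"
    and "card {v \<in> V. v i = mgcd V i} \<le> mac_low_rec (Suc k) (card V)"
proof -
  have "V \<noteq> {}" using assms(5) by auto
  note slice = gotzmann_min_slice[OF assms(1-4) this assms(6)]
  show "hbar (Suc k) (card V) \<le> card {v \<in> V. v i = mgcd V i}"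
    using hbar_le_if_mac_up_rec_split[OF slice(2,3)] assms(5) by simp
  show "card {v \<in> V. v i = mgcd V i} \<le> mac_low_rec (Suc k) (card V)"
    using slice(1) by (simp add: add_mac_up_rec_le_iff)
qed

lemma card_le_1_if_one_variable: "V \<subseteq> monomials 1 d \<Longrightarrow> card V \<le> 1"
  using card_mono[OF finite_monomials_on, of "{1}" V d] card_monomials_on[of "{1}" 0 d]
  by (simp add: monomials_eq_monomials_on)

theorem lemma2p2:
  fixes n d :: nat and V :: "(nat \<Rightarrow> nat) set"
  assumes "n \<ge> 1"
    and "V \<subseteq> monomials n d"
    and "gotzmann n V"
  shows "\<forall>i\<in>{1..n}. hbar (n - 1) (card V) \<le> card (Dset n d i V)
                   \<and> card (Dset n d i V) \<le> mac_low (n - 1) (card V)"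
proof (intro ballI)
  fix i assume i: "i \<in> {1..n}"
  show "hbar (n - 1) (card V) \<le> card (Dset n d i V) \<and> card (Dset n d i V) \<le> mac_low (n - 1) (card V)"
  proof (cases "card V \<le> 1")
    case True
    then show ?thesis by (simp add: Dset_def hbar_le_1)
  next
    case False
    then have "1 < card V" "n \<noteq> 1"
      using assms(2) card_le_1_if_one_variable by auto
    then obtain k where k: "n = Suc (Suc k)"
      using assms(1) by (metis One_nat_def Suc_le_D le_SucE not_less_eq_eq)
    have gotzmann: "card (MV_on {1..n} V) = mac_up_rec (Suc k) (card V)"
      using assms(3) k by (simp add: gotzmann_def MV_eq_MV_on mac_up_eq_rec)
    have V: "V \<subseteq> monomials_on {1..n} d"
      using assms(2) by (simp add: monomials_eq_monomials_on)
    have "card {1..n} = Suc (Suc k)"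
      using k by simp
    note bounds = gotzmann_min_slice_bounds[OF finite_atLeastAtMost this i V \<open>1 < card V\<close> gotzmann]
    have "n - 1 = Suc k"
      using k by simp
    then show ?thesis
      unfolding Dset_eq_min_slice[OF \<open>1 < card V\<close> assms(2)] using bounds by (simp add: mac_low_eq_rec)
  qed
qed

end
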